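(* Let $p\ge1$, $m=2p$, $N>M\ge0$, let $\beta(0),\dots,\beta(N)$ be $p\times m$ matrices with $\beta(k)J\beta(k)^*=I_p$, put $C_k=2K^*\beta(k)^*\beta(k)K-j$, and consider the system $W_{k+1}(\lambda)-W_k(\lambda)=-\frac{i}{\lambda}jC_kW_k(\lambda)$, $W_0=I_m$. Then $\mathcal N(N)\subset\mathcal N(M)$.
   Context: $\mathbb C_-$ is the open lower half-plane; $j=\mathrm{diag}(I_p,-I_p)$, $J=\begin{bmatrix}0&I_p\\ I_p&0\end{bmatrix}$, $K=\frac1{\sqrt2}\begin{bmatrix}I_p&-I_p\\ I_p&I_p\end{bmatrix}$. For $L\le N$ let $\mathcal W(L,\lambda)=\{\mathcal W_{ij}(L,\lambda)\}_{i,j=1}^2=KW_{L+1}(\bar\lambda)^*$ ($p\times p$ blocks), and let $\mathcal N(L)$ be the set of $p\times p$ matrix functions $\varphi$ holomorphic in $\mathbb C_-$ of the form $\varphi=i(\mathcal W_{21}(L,\cdot)R+\mathcal W_{22}(L,\cdot)Q)(\mathcal W_{11}(L,\cdot)R+\mathcal W_{12}(L,\cdot)Q)^{-1}$, where $R,Q$ are $p\times p$ matrix functions meromorphic in $\mathbb C_-$, well defined at $\lambda=-i$, with $R^*R+Q^*Q>0$ and $R^*R\le Q^*Q$ (Weyl functions on the interval $0\le k\le L$). *)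

theory Defs
  imports "HOL-Complex_Analysis.Complex_Analysis" "Jordan_Normal_Form.Schur_Decomposition"
begin

definition lower_half_plane :: "complex set" where
  "lower_half_plane = {z. Im z < 0}"

definition jmat :: "nat \<Rightarrow> complex mat" where
  "jmat p = mat (2*p) (2*p) (\<lambda>(a,b). if a = b then (if a < p then 1 else -1) else 0)"

definition Jmat :: "nat \<Rightarrow> complex mat" where
  "Jmat p = mat (2*p) (2*p) (\<lambda>(a,b). if b = a + p \<or> a = b + p then 1 else 0)"

definition Kmat :: "nat \<Rightarrow> complex mat" where
  "Kmat p = mat (2*p) (2*p) (\<lambda>(a,b).
     complex_of_real (1 / sqrt 2) *
       (if a = b then 1 else if b = a + p then -1 else if a = b + p then 1 else 0))"

definition Cmat :: "nat \<Rightarrow> (nat \<Rightarrow> complex mat) \<Rightarrow> nat \<Rightarrow> complex mat" where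
  "Cmat p \<beta> k = (2::complex) \<cdot>\<^sub>m (mat_adjoint (Kmat p) * mat_adjoint (\<beta> k) * \<beta> k * Kmat p) - jmat p"

fun Wsol :: "nat \<Rightarrow> (nat \<Rightarrow> complex mat) \<Rightarrow> nat \<Rightarrow> complex \<Rightarrow> complex mat" where
  "Wsol p \<beta> 0 z = 1\<^sub>m (2*p)"
| "Wsol p \<beta> (Suc k) z =
     Wsol p \<beta> k z + (- \<i> / z) \<cdot>\<^sub>m (jmat p * Cmat p \<beta> k * Wsol p \<beta> k z)"

definition WW :: "nat \<Rightarrow> (nat \<Rightarrow> complex mat) \<Rightarrow> nat \<Rightarrow> complex \<Rightarrow> complex mat" where
  "WW p \<beta> L z = Kmat p * mat_adjoint (Wsol p \<beta> (Suc L) (cnj z))"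

definition WWblock :: "nat \<Rightarrow> (nat \<Rightarrow> complex mat) \<Rightarrow> nat \<Rightarrow> nat \<Rightarrow> nat \<Rightarrow> complex \<Rightarrow> complex mat" where
  "WWblock p \<beta> L a b z =
     mat p p (\<lambda>(r,c). WW p \<beta> L z $$ (r + (a - 1) * p, c + (b - 1) * p))"

definition pos_def_mat :: "nat \<Rightarrow> complex mat \<Rightarrow> bool" where
  "pos_def_mat n A \<longleftrightarrow> A \<in> carrier_mat n n \<and> mat_adjoint A = A \<and>
     (\<forall>v \<in> carrier_vec n. v \<noteq> 0\<^sub>v n \<longrightarrow> Re (conjugate v \<bullet> (A *\<^sub>v v)) > 0)"

definition pos_semidef_mat :: "nat \<Rightarrow> complex mat \<Rightarrow> bool" where
  "pos_semidef_mat n A \<longleftrightarrow> A \<in> carrier_mat n n \<and> mat_adjoint A = A \<and>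
     (\<forall>v \<in> carrier_vec n. Re (conjugate v \<bullet> (A *\<^sub>v v)) \<ge> 0)"

text \<open>A p x p matrix function meromorphic in S (entrywise; represented "nicely", i.e. without
  removable singularities), and the points where it is well defined (no entry has a pole).\<close>
definition mat_meromorphic_on :: "nat \<Rightarrow> (complex \<Rightarrow> complex mat) \<Rightarrow> complex set \<Rightarrow> bool" where
  "mat_meromorphic_on n F S \<longleftrightarrow> (\<forall>z\<in>S. F z \<in> carrier_mat n n) \<and>
     (\<forall>a<n. \<forall>b<n. (\<lambda>z. F z $$ (a,b)) nicely_meromorphic_on S)"

definition mat_defined_at :: "nat \<Rightarrow> (complex \<Rightarrow> complex mat) \<Rightarrow> complex \<Rightarrow> bool" where
  "mat_defined_at n F z \<longleftrightarrow> (\<forall>a<n. \<forall>b<n. \<not> is_pole (\<lambda>w. F w $$ (a,b)) z)"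

definition mat_holomorphic_on :: "nat \<Rightarrow> (complex \<Rightarrow> complex mat) \<Rightarrow> complex set \<Rightarrow> bool" where
  "mat_holomorphic_on n F S \<longleftrightarrow> (\<forall>z\<in>S. F z \<in> carrier_mat n n) \<and>
     (\<forall>a<n. \<forall>b<n. (\<lambda>z. F z $$ (a,b)) holomorphic_on S)"

definition WeylSet :: "nat \<Rightarrow> (nat \<Rightarrow> complex mat) \<Rightarrow> nat \<Rightarrow> (complex \<Rightarrow> complex mat) set" where
  "WeylSet p \<beta> L = {\<phi>. mat_holomorphic_on p \<phi> lower_half_plane \<and>
     (\<exists>R Q. mat_meromorphic_on p R lower_half_plane \<and> mat_meromorphic_on p Q lower_half_plane \<and>
        mat_defined_at p R (-\<i>) \<and> mat_defined_at p Q (-\<i>) \<and>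
        (\<forall>z\<in>lower_half_plane. mat_defined_at p R z \<and> mat_defined_at p Q z \<longrightarrow>
            pos_def_mat p (mat_adjoint (R z) * R z + mat_adjoint (Q z) * Q z) \<and>
            pos_semidef_mat p (mat_adjoint (Q z) * Q z - mat_adjoint (R z) * R z)) \<and>
        (\<forall>\<^sub>\<approx>z\<in>lower_half_plane.
            invertible_mat (WWblock p \<beta> L 1 1 z * R z + WWblock p \<beta> L 1 2 z * Q z) \<and>
            \<phi> z = \<i> \<cdot>\<^sub>m (WWblock p \<beta> L 2 1 z * R z + WWblock p \<beta> L 2 2 z * Q z) *
                   the (mat_inverse (WWblock p \<beta> L 1 1 z * R z + WWblock p \<beta> L 1 2 z * Q z))))}"

end

theory Submission
  imports Defs
begin

(* Taking adjoints in the recursion gives W_{L+1}(conj z)^* = B_0(z) ... B_L(z) with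
   B_k(z) = I + (i/z) C_k j, so K W_{N+1}(conj z)^* = K W_{M+1}(conj z)^* U(z) for
   U = B_{M+1} ... B_N.  Hence a Weyl function of the interval [0, N] with parameter pair (R, Q) is
   a Weyl function of [0, M] with the pair (R', Q') whose stack is U (R; Q), once the removable
   singularities of U (R; Q) are removed.  Since C_k j = 2 P_k - I for the idempotent
   P_k = u_k^* u_k j with u_k = beta(k) K, each B_k maps the cone {x. x^* j x <= 0} minus the
   origin into itself when Im z < 0; this transfers the two positivity conditions from (R, Q) to
   (R', Q').  Finally, B_k(-z) B_k(z) = (1 + z^-2) I, so U has an analytic left inverse up to a
   scalar whose only zero in the lower half-plane is -i, where (R, Q) is regular by assumption;
   therefore (R', Q') is regular exactly where (R, Q) is. *)

no_notation inner (infix \<open>\<bullet>\<close> 70)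

lemma dim_row_mat_adjoint[simp]: "dim_row (mat_adjoint A) = dim_col A"
  and dim_col_mat_adjoint[simp]: "dim_col (mat_adjoint A) = dim_row A"
  unfolding mat_adjoint_def by simp_all

lemma index_mat_adjoint[simp]:
  "i < dim_col A \<Longrightarrow> j < dim_row A \<Longrightarrow> mat_adjoint A $$ (i,j) = conjugate (A $$ (j,i))"
  unfolding mat_adjoint_def by (simp add: mat_of_rows_def)

lemma mat_adjoint_carrier[simp]: "A \<in> carrier_mat n m \<Longrightarrow> mat_adjoint A \<in> carrier_mat m n"
  unfolding carrier_mat_def by simp

lemma mat_adjoint_adjoint[simp]: "mat_adjoint (mat_adjoint A) = A"
  by (rule eq_matI) auto

lemma mat_adjoint_one[simp]: "mat_adjoint (1\<^sub>m n :: complex mat) = 1\<^sub>m n"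
  by (rule eq_matI) auto

lemma mat_adjoint_smult: "mat_adjoint (c \<cdot>\<^sub>m A) = conjugate c \<cdot>\<^sub>m mat_adjoint A"
  by (rule eq_matI) (simp_all add: conjugate_dist_mul)

lemma mat_adjoint_add:
  "A \<in> carrier_mat n m \<Longrightarrow> B \<in> carrier_mat n m \<Longrightarrow> mat_adjoint (A + B) = mat_adjoint A + mat_adjoint B"
  by (rule eq_matI) (simp_all add: conjugate_dist_add)

lemma conjugate_dist_diff: "conjugate (a - b :: 'a :: conjugatable_ring) = conjugate a - conjugate b"
  by (metis conjugate_dist_add conjugate_neg diff_conv_add_uminus)

lemma mat_adjoint_minus:
  "A \<in> carrier_mat n m \<Longrightarrow> B \<in> carrier_mat n m \<Longrightarrow> mat_adjoint (A - B) = mat_adjoint A - mat_adjoint B"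
  by (rule eq_matI) (simp_all add: conjugate_dist_diff)

lemma mat_adjoint_mult:
  assumes "A \<in> carrier_mat n m" "B \<in> carrier_mat m k"
  shows "mat_adjoint (A * B) = mat_adjoint B * mat_adjoint A"
proof (rule eq_matI)
  fix i j assume "i < dim_row (mat_adjoint B * mat_adjoint A)" "j < dim_col (mat_adjoint B * mat_adjoint A)"
  with assms have i: "i < k" and j: "j < n" by auto
  have "mat_adjoint (A * B) $$ (i,j) = conjugate (\<Sum>l<m. A $$ (j,l) * B $$ (l,i))"
    using assms i j by (simp add: scalar_prod_def atLeast0LessThan)
  also have "\<dots> = (\<Sum>l<m. conjugate (B $$ (l,i)) * conjugate (A $$ (j,l)))"
    by (simp add: sum_conjugate conjugate_dist_mul mult.commute)
  also have "\<dots> = (mat_adjoint B * mat_adjoint A) $$ (i,j)"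
    using assms i j by (simp add: scalar_prod_def atLeast0LessThan)
  finally show "mat_adjoint (A * B) $$ (i,j) = (mat_adjoint B * mat_adjoint A) $$ (i,j)" .
qed (use assms in simp_all)

lemma mat_adjoint_mult_vec_sprod:
  assumes A: "A \<in> carrier_mat n m" and x: "x \<in> carrier_vec n" and y: "y \<in> carrier_vec m"
  shows "conjugate x \<bullet> (A *\<^sub>v y) = conjugate (mat_adjoint A *\<^sub>v x) \<bullet> y"
proof -
  have "conjugate x \<bullet> (A *\<^sub>v y) = (\<Sum>i<n. \<Sum>k<m. conjugate (x $ i) * A $$ (i,k) * y $ k)"
    using A x y by (simp add: scalar_prod_def sum_distrib_left atLeast0LessThan mult.assoc)
  also have "\<dots> = (\<Sum>k<m. \<Sum>i<n. conjugate (x $ i) * A $$ (i,k) * y $ k)"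
    by (rule sum.swap)
  also have "\<dots> = (\<Sum>k<m. (\<Sum>i<n. conjugate (x $ i) * A $$ (i,k)) * y $ k)"
    by (simp add: sum_distrib_right)
  also have "\<dots> = conjugate (mat_adjoint A *\<^sub>v x) \<bullet> y"
    using A x y by (simp add: scalar_prod_def sum_conjugate conjugate_dist_mul atLeast0LessThan mult.commute)
  finally show ?thesis .
qed

(* \<le> on complex numbers is the partial order of HOL-Library.Complex_Order *)
lemma sprod_conjugate_self_ge_0: "conjugate x \<bullet> (x :: complex vec) \<ge> 0"
proof -
  have x: "x \<in> carrier_vec (dim_vec x)" by (rule carrier_vecI) (rule refl)
  show ?thesis
    using conjugate_square_ge_0_vec[of x] unfolding conjugate_vec_sprod_comm[OF x x] .
qed

lemma sprod_conjugate_self: "conjugate x \<bullet> (x :: complex vec) = of_real (Re (conjugate x \<bullet> x))"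
  using sprod_conjugate_self_ge_0[of x] by (simp add: less_eq_complex_def complex_eq_iff)

lemma sprod_conjugate_self_Re_nonneg: "Re (conjugate x \<bullet> (x :: complex vec)) \<ge> 0"
  using sprod_conjugate_self_ge_0[of x] by (simp add: less_eq_complex_def)

lemma sprod_conjugate_self_eq_0_iff:
  assumes x: "x \<in> carrier_vec n"
  shows "Re (conjugate x \<bullet> (x :: complex vec)) = 0 \<longleftrightarrow> x = 0\<^sub>v n"
proof -
  have "Re (conjugate x \<bullet> x) = 0 \<longleftrightarrow> conjugate x \<bullet> x = 0"
    using sprod_conjugate_self[of x] by (metis of_real_0 zero_complex.sel(1))
  also have "\<dots> \<longleftrightarrow> x = 0\<^sub>v n"
    using conjugate_square_eq_0_vec[OF x] unfolding conjugate_vec_sprod_comm[OF x x] .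
  finally show ?thesis .
qed

lemma sprod_conjugate_self_Re_pos_iff:
  "x \<in> carrier_vec n \<Longrightarrow> 0 < Re (conjugate x \<bullet> (x :: complex vec)) \<longleftrightarrow> x \<noteq> 0\<^sub>v n"
  using sprod_conjugate_self_Re_nonneg[of x] sprod_conjugate_self_eq_0_iff[of x n] by linarith

lemma sum_lessThan_double:
  "(\<Sum>l<2*p. f l) = (\<Sum>l<p. f l) + (\<Sum>l<p. f (l + p))" for f :: "nat \<Rightarrow> 'a :: comm_monoid_add"
proof -
  have "(\<Sum>l<2*p. f l) = (\<Sum>l\<in>{0..<p}. f l) + (\<Sum>l\<in>{p..<2*p}. f l)"
    by (simp add: atLeast0LessThan[symmetric] sum.atLeastLessThan_concat)
  also have "(\<Sum>l\<in>{p..<2*p}. f l) = (\<Sum>l\<in>{0..<p}. f (l + p))"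
    using sum.shift_bounds_nat_ivl[of f 0 p p] by (simp add: mult_2)
  finally show ?thesis by (simp add: atLeast0LessThan)
qed

lemma less_double_cases:
  "(r::nat) < 2*p \<Longrightarrow> (r < p \<Longrightarrow> P r) \<Longrightarrow> (\<And>r'. r' < p \<Longrightarrow> P (r' + p)) \<Longrightarrow> P r"
  by (metis add.commute le_add_diff_inverse2 less_diff_conv2 mult_2 not_less)

lemma index_mult_mat_sum:
  "A \<in> carrier_mat n k \<Longrightarrow> B \<in> carrier_mat k m \<Longrightarrow> i < n \<Longrightarrow> j < m \<Longrightarrow>
    (A * B) $$ (i,j) = (\<Sum>l<k. A $$ (i,l) * B $$ (l,j))"
  by (simp add: scalar_prod_def atLeast0LessThan)

lemma index_mult_mat_double:
  assumes "A \<in> carrier_mat n (2*p)" "B \<in> carrier_mat (2*p) m" "i < n" "k < m"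
  shows "(A * B) $$ (i,k) = (\<Sum>l<p. A $$ (i,l) * B $$ (l,k)) + (\<Sum>l<p. A $$ (i,l+p) * B $$ (l+p,k))"
  using assms sum_lessThan_double[of "\<lambda>l. A $$ (i,l) * B $$ (l,k)" p]
  by (simp add: scalar_prod_def atLeast0LessThan)

lemma jmat_carrier[simp]: "jmat p \<in> carrier_mat (2*p) (2*p)"
  and Jmat_carrier[simp]: "Jmat p \<in> carrier_mat (2*p) (2*p)"
  and Kmat_carrier[simp]: "Kmat p \<in> carrier_mat (2*p) (2*p)"
  by (simp_all add: jmat_def Jmat_def Kmat_def)

lemma jmat_dims[simp]: "dim_row (jmat p) = 2*p" "dim_col (jmat p) = 2*p"
  and Jmat_dims[simp]: "dim_row (Jmat p) = 2*p" "dim_col (Jmat p) = 2*p"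
  and Kmat_dims[simp]: "dim_row (Kmat p) = 2*p" "dim_col (Kmat p) = 2*p"
  by (simp_all add: jmat_def Jmat_def Kmat_def)

lemma jmat_index[simp]:
  assumes "a < p" "l < p"
  shows "jmat p $$ (a,l) = (if l = a then 1 else 0)" "jmat p $$ (a,l+p) = 0"
    "jmat p $$ (a+p,l) = 0" "jmat p $$ (a+p,l+p) = (if l = a then -1 else 0)"
  using assms by (auto simp: jmat_def)

lemma Jmat_index[simp]:
  assumes "a < p" "l < p"
  shows "Jmat p $$ (a,l) = 0" "Jmat p $$ (a,l+p) = (if l = a then 1 else 0)"
    "Jmat p $$ (a+p,l) = (if l = a then 1 else 0)" "Jmat p $$ (a+p,l+p) = 0"
  using assms by (auto simp: Jmat_def)

lemma Kmat_index[simp]: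
  assumes "a < p" "l < p"
  shows "Kmat p $$ (a,l) = (if l = a then of_real (1 / sqrt 2) else 0)"
    "Kmat p $$ (a,l+p) = (if l = a then - of_real (1 / sqrt 2) else 0)"
    "Kmat p $$ (a+p,l) = (if l = a then of_real (1 / sqrt 2) else 0)"
    "Kmat p $$ (a+p,l+p) = (if l = a then of_real (1 / sqrt 2) else 0)"
  using assms by (auto simp: Kmat_def)

lemma mat_adjoint_jmat: "mat_adjoint (jmat p) = jmat p"
  by (rule eq_matI) (auto simp: jmat_def)

lemma jmat_mult_jmat: "jmat p * jmat p = 1\<^sub>m (2*p)"
proof (rule eq_matI)
  fix i k assume "i < dim_row (1\<^sub>m (2*p) :: complex mat)" "k < dim_col (1\<^sub>m (2*p) :: complex mat)"
  then have i: "i < 2*p" and k: "k < 2*p" by auto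
  show "(jmat p * jmat p) $$ (i,k) = 1\<^sub>m (2*p) $$ (i,k)"
    using i k by (subst index_mult_mat_double[of _ "2*p" p _ "2*p"], simp_all)
      (rule less_double_cases[OF i]; rule less_double_cases[OF k]; simp add: if_distrib cong: if_cong)
qed auto

lemma Kmat_jmat_adjoint: "Kmat p * jmat p * mat_adjoint (Kmat p) = Jmat p"
proof (rule eq_matI)
  fix i k assume "i < dim_row (Jmat p)" "k < dim_col (Jmat p)"
  then have i: "i < 2*p" and k: "k < 2*p" by auto
  define c where "c = complex_of_real (1 / sqrt 2)"
  have c: "c * c = 1 / 2" "cnj c = c"
    unfolding c_def by (simp_all flip: of_real_mult)
  note K_index = Kmat_index[folded c_def]
  have Kj_sign: "(Kmat p * jmat p) $$ (a,b) = Kmat p $$ (a,b) * (if b < p then 1 else -1)"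
    if "a < 2*p" "b < 2*p" for a b
  proof -
    have "(Kmat p * jmat p) $$ (a,b) =
        (\<Sum>l<p. Kmat p $$ (a,l) * jmat p $$ (l,b)) + (\<Sum>l<p. Kmat p $$ (a,l+p) * jmat p $$ (l+p,b))"
      by (rule index_mult_mat_double[OF Kmat_carrier jmat_carrier that])
    also have "\<dots> = Kmat p $$ (a,b) * (if b < p then 1 else -1)"
      by (rule less_double_cases[OF that(1)]; rule less_double_cases[OF that(2)];
          simp del: Kmat_index add: K_index if_distrib cong: if_cong)
    finally show ?thesis .
  qed
  have Kj_index: "(Kmat p * jmat p) $$ (a,l) = (if l = a then c else 0)"
     "(Kmat p * jmat p) $$ (a,l+p) = (if l = a then c else 0)"
     "(Kmat p * jmat p) $$ (a+p,l) = (if l = a then c else 0)"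
     "(Kmat p * jmat p) $$ (a+p,l+p) = (if l = a then - c else 0)"
    if "a < p" "l < p" for a l
    using that by (simp_all del: Kmat_index index_mult_mat add: Kj_sign K_index)
  have Kj: "Kmat p * jmat p \<in> carrier_mat (2*p) (2*p)"
    by (rule mult_carrier_mat[OF Kmat_carrier jmat_carrier])
  have "(Kmat p * jmat p * mat_adjoint (Kmat p)) $$ (i,k) =
      (\<Sum>l<p. (Kmat p * jmat p) $$ (i,l) * mat_adjoint (Kmat p) $$ (l,k)) +
      (\<Sum>l<p. (Kmat p * jmat p) $$ (i,l+p) * mat_adjoint (Kmat p) $$ (l+p,k))"
    by (rule index_mult_mat_double[OF Kj _ i k]) simp
  also have "\<dots> = Jmat p $$ (i,k)"
    by (rule less_double_cases[OF i]; rule less_double_cases[OF k];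
        simp del: Kmat_index index_mult_mat add: K_index Kj_index c if_distrib cong: if_cong)
  finally show "(Kmat p * jmat p * mat_adjoint (Kmat p)) $$ (i,k) = Jmat p $$ (i,k)" .
qed auto

section \<open>The reflection attached to a J-normalized row block\<close>

lemma eq_mat_on_vecI:
  assumes "A \<in> carrier_mat n n" "B \<in> carrier_mat n n"
    and "\<And>x. x \<in> carrier_vec n \<Longrightarrow> A *\<^sub>v x = B *\<^sub>v (x :: 'a :: comm_ring_1 vec)"
  shows "A = B"
proof (rule eq_matI)
  fix i j assume "i < dim_row B" "j < dim_col B"
  with assms(1,2) have i: "i < n" and j: "j < n" by auto
  have "A $$ (i,j) = (A *\<^sub>v unit_vec n j) $ i" using assms(1) i j by simp
  also have "\<dots> = (B *\<^sub>v unit_vec n j) $ i" using assms(3)[OF unit_vec_carrier] by simp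
  also have "\<dots> = B $$ (i,j)" using assms(2) i j by simp
  finally show "A $$ (i,j) = B $$ (i,j)" .
qed (use assms(1,2) in simp_all)

lemma smult_vec_eq_0_iff:
  assumes "x \<in> carrier_vec n" "c \<noteq> 0"
  shows "c \<cdot>\<^sub>v x = 0\<^sub>v n \<longleftrightarrow> x = (0\<^sub>v n :: 'a :: field vec)"
proof
  assume scaled: "c \<cdot>\<^sub>v x = 0\<^sub>v n"
  show "x = 0\<^sub>v n"
  proof (rule eq_vecI)
    fix i assume "i < dim_vec (0\<^sub>v n :: 'a vec)"
    then have i: "i < n" by simp
    have "c * x $ i = (c \<cdot>\<^sub>v x) $ i" using assms(1) i by simp
    also have "\<dots> = 0" using scaled i by simp
    finally show "x $ i = 0\<^sub>v n $ i" using assms(2) i by simp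
  qed (use assms(1) in simp)
next
  assume "x = 0\<^sub>v n"
  then show "c \<cdot>\<^sub>v x = 0\<^sub>v n" by (intro eq_vecI) simp_all
qed

lemma smult_mat_mult_vec:
  "A \<in> carrier_mat n m \<Longrightarrow> x \<in> carrier_vec m \<Longrightarrow> (c \<cdot>\<^sub>m A) *\<^sub>v x = c \<cdot>\<^sub>v (A *\<^sub>v x)"
  by (rule eq_vecI) (simp_all add: scalar_prod_def sum_distrib_left mult.assoc)

lemma one_smult_mult_vec:
  assumes "T \<in> carrier_mat n n" "x \<in> carrier_vec n"
  shows "(1\<^sub>m n + s \<cdot>\<^sub>m T) *\<^sub>v x = x + s \<cdot>\<^sub>v (T *\<^sub>v (x :: 'a :: comm_ring_1 vec))"
  using assms by (simp add: add_mult_distrib_mat_vec[of _ n n] smult_mat_mult_vec)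

lemma involution_factors_mult:
  fixes T :: "'a :: field mat"
  assumes T: "T \<in> carrier_mat n n" and TT: "T * T = 1\<^sub>m n"
  shows "(1\<^sub>m n + (- s) \<cdot>\<^sub>m T) * (1\<^sub>m n + s \<cdot>\<^sub>m T) = (1 - s\<^sup>2) \<cdot>\<^sub>m 1\<^sub>m n"
proof (rule eq_mat_on_vecI)
  fix x :: "'a vec" assume x: "x \<in> carrier_vec n"
  have Tx: "T *\<^sub>v x \<in> carrier_vec n" using T x by simp
  have TTx: "T *\<^sub>v (T *\<^sub>v x) = x"
    using T x by (simp flip: assoc_mult_mat_vec[OF T T x] add: TT)
  have factor: "1\<^sub>m n + c \<cdot>\<^sub>m T \<in> carrier_mat n n" for c
    using T by simp
  have "((1\<^sub>m n + (- s) \<cdot>\<^sub>m T) * (1\<^sub>m n + s \<cdot>\<^sub>m T)) *\<^sub>v x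
      = (x + s \<cdot>\<^sub>v (T *\<^sub>v x)) + (- s) \<cdot>\<^sub>v (T *\<^sub>v x + s \<cdot>\<^sub>v x)"
    using T x Tx by (simp add: assoc_mult_mat_vec[OF factor factor x] one_smult_mult_vec
        mult_add_distrib_mat_vec[OF T] mult_mat_vec[OF T] TTx)
  also have "\<dots> = ((1 - s\<^sup>2) \<cdot>\<^sub>m 1\<^sub>m n) *\<^sub>v x"
    using T x Tx by (intro eq_vecI) (simp_all add: smult_mat_mult_vec algebra_simps power2_eq_square)
  finally show "((1\<^sub>m n + (- s) \<cdot>\<^sub>m T) * (1\<^sub>m n + s \<cdot>\<^sub>m T)) *\<^sub>v x = ((1 - s\<^sup>2) \<cdot>\<^sub>m 1\<^sub>m n) *\<^sub>v x" .
qed (use T in auto)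

(* (2 u^* u - j) j = 2 P - I with P = u^* u j, and P is idempotent when u j u^* = I *)
definition reflection_mat :: "complex mat \<Rightarrow> complex mat \<Rightarrow> complex mat" where
  "reflection_mat j u = (2 \<cdot>\<^sub>m (mat_adjoint u * u) - j) * j"

definition jform :: "complex mat \<Rightarrow> complex vec \<Rightarrow> complex" where
  "jform j x = conjugate x \<bullet> (j *\<^sub>v x)"

locale signature_row_block =
  fixes n m :: nat and j u :: "complex mat"
  assumes j_carrier[simp]: "j \<in> carrier_mat n n"
    and j_involutive: "j * j = 1\<^sub>m n"
    and j_hermitian: "mat_adjoint j = j"
    and u_carrier[simp]: "u \<in> carrier_mat m n"
    and u_j_normalized: "u * j * mat_adjoint u = 1\<^sub>m m"
begin

lemma carrier_dims[simp]: "dim_row j = n" "dim_col j = n" "dim_row u = m" "dim_col u = n"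
  using j_carrier u_carrier by blast+

lemma adjoint_u_carrier[simp]: "mat_adjoint u \<in> carrier_mat n m"
  by simp

lemma mult_vec_carriers[simp]:
  "x \<in> carrier_vec n \<Longrightarrow> j *\<^sub>v x \<in> carrier_vec n"
  "x \<in> carrier_vec n \<Longrightarrow> u *\<^sub>v x \<in> carrier_vec m"
  "y \<in> carrier_vec m \<Longrightarrow> mat_adjoint u *\<^sub>v y \<in> carrier_vec n"
  by (auto intro: mult_mat_vec_carrier[OF j_carrier] mult_mat_vec_carrier[OF u_carrier]
      mult_mat_vec_carrier[OF adjoint_u_carrier])

lemma gram_carrier[simp]: "mat_adjoint u * u \<in> carrier_mat n n"
  by (rule mult_carrier_mat[of _ n m]) simp_all

lemma reflection_carrier[simp]: "reflection_mat j u \<in> carrier_mat n n"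
  unfolding reflection_mat_def by (rule mult_carrier_mat[of _ n n]) (simp_all add: minus_carrier_mat)

lemma j_j_mult_vec: "x \<in> carrier_vec n \<Longrightarrow> j *\<^sub>v (j *\<^sub>v x) = x"
  by (simp flip: assoc_mult_mat_vec[of j n n j n] add: j_involutive)

lemma u_j_adjoint_mult_vec: "y \<in> carrier_vec m \<Longrightarrow> u *\<^sub>v (j *\<^sub>v (mat_adjoint u *\<^sub>v y)) = y"
proof -
  assume y: "y \<in> carrier_vec m"
  have uj: "u * j \<in> carrier_mat m n" by (rule mult_carrier_mat[of _ m n]) simp_all
  have "(u * j * mat_adjoint u) *\<^sub>v y = u *\<^sub>v (j *\<^sub>v (mat_adjoint u *\<^sub>v y))"
    using y by (simp add: assoc_mult_mat_vec[OF uj adjoint_u_carrier y]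
        assoc_mult_mat_vec[OF u_carrier j_carrier])
  then show ?thesis using y by (simp add: u_j_normalized)
qed

lemma reflection_mult_vec:
  assumes x: "x \<in> carrier_vec n"
  shows "reflection_mat j u *\<^sub>v x = 2 \<cdot>\<^sub>v (mat_adjoint u *\<^sub>v (u *\<^sub>v (j *\<^sub>v x))) - x"
proof -
  have jx: "j *\<^sub>v x \<in> carrier_vec n" using x by simp
  have C: "2 \<cdot>\<^sub>m (mat_adjoint u * u) - j \<in> carrier_mat n n"
    by (simp add: minus_carrier_mat)
  have "reflection_mat j u *\<^sub>v x = (2 \<cdot>\<^sub>m (mat_adjoint u * u) - j) *\<^sub>v (j *\<^sub>v x)"
    unfolding reflection_mat_def by (rule assoc_mult_mat_vec[OF C j_carrier x])
  also have "\<dots> = 2 \<cdot>\<^sub>v (mat_adjoint u *\<^sub>v (u *\<^sub>v (j *\<^sub>v x))) - x"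
    using jx x by (simp add: minus_mult_distrib_mat_vec[of _ n n] smult_mat_mult_vec[OF gram_carrier jx]
        assoc_mult_mat_vec[OF adjoint_u_carrier u_carrier jx] j_j_mult_vec)
  finally show ?thesis .
qed

lemma reflection_involutive: "reflection_mat j u * reflection_mat j u = 1\<^sub>m n"
proof (rule eq_mat_on_vecI)
  fix x :: "complex vec" assume x: "x \<in> carrier_vec n"
  define w where "w = mat_adjoint u *\<^sub>v (u *\<^sub>v (j *\<^sub>v x))"
  have w: "w \<in> carrier_vec n" unfolding w_def using x by simp
  have "u *\<^sub>v (j *\<^sub>v (2 \<cdot>\<^sub>v w - x)) = 2 \<cdot>\<^sub>v (u *\<^sub>v (j *\<^sub>v w)) - u *\<^sub>v (j *\<^sub>v x)"
    using w x by (simp add: mult_minus_distrib_mat_vec[of _ n n] mult_mat_vec[of _ n n]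
        mult_minus_distrib_mat_vec[of _ m n] mult_mat_vec[of _ m n])
  also have "\<dots> = u *\<^sub>v (j *\<^sub>v x)"
    unfolding w_def using x by (intro eq_vecI) (simp_all add: u_j_adjoint_mult_vec)
  finally have "reflection_mat j u *\<^sub>v (reflection_mat j u *\<^sub>v x) = 2 \<cdot>\<^sub>v w - (2 \<cdot>\<^sub>v w - x)"
    using w x by (simp add: reflection_mult_vec w_def[symmetric])
  also have "\<dots> = x" using w x by (intro eq_vecI) simp_all
  finally show "(reflection_mat j u * reflection_mat j u) *\<^sub>v x = 1\<^sub>m n *\<^sub>v x"
    using x by (simp add: assoc_mult_mat_vec[OF reflection_carrier reflection_carrier x])
qed (simp_all add: mult_carrier_mat[OF reflection_carrier reflection_carrier])

lemma jform_reflection_step: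
  assumes x: "x \<in> carrier_vec n"
  defines "y \<equiv> u *\<^sub>v (j *\<^sub>v x)"
  shows "jform j (x + s \<cdot>\<^sub>v (reflection_mat j u *\<^sub>v x)) =
    cnj (1 - s) * (1 - s) * jform j x + of_real (4 * Re s) * (conjugate y \<bullet> y)"
proof -
  define w where "w = mat_adjoint u *\<^sub>v y"
  have jx: "j *\<^sub>v x \<in> carrier_vec n" and y: "y \<in> carrier_vec m" and w: "w \<in> carrier_vec n"
    and jw: "j *\<^sub>v w \<in> carrier_vec n"
    using x by (simp_all add: y_def w_def)
  have step: "x + s \<cdot>\<^sub>v (reflection_mat j u *\<^sub>v x) = (1 - s) \<cdot>\<^sub>v x + (2 * s) \<cdot>\<^sub>v w"
    unfolding reflection_mult_vec[OF x] w_def y_def using x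
    by (intro eq_vecI) (simp_all add: algebra_simps)
  have xw: "conjugate x \<bullet> (j *\<^sub>v w) = conjugate y \<bullet> y"
    using mat_adjoint_mult_vec_sprod[OF j_carrier x w] mat_adjoint_mult_vec_sprod[OF adjoint_u_carrier jx y]
    by (simp add: j_hermitian w_def y_def)
  have wx: "conjugate w \<bullet> (j *\<^sub>v x) = conjugate y \<bullet> y"
    using mat_adjoint_mult_vec_sprod[OF u_carrier y jx] by (simp add: w_def y_def)
  have ww: "conjugate w \<bullet> (j *\<^sub>v w) = conjugate y \<bullet> y"
    using mat_adjoint_mult_vec_sprod[OF u_carrier y jw] by (simp add: w_def u_j_adjoint_mult_vec y)
  have "jform j ((1 - s) \<cdot>\<^sub>v x + (2 * s) \<cdot>\<^sub>v w) =
      cnj (1 - s) * (1 - s) * (conjugate x \<bullet> (j *\<^sub>v x)) + cnj (1 - s) * (2 * s) * (conjugate x \<bullet> (j *\<^sub>v w))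
      + cnj (2 * s) * (1 - s) * (conjugate w \<bullet> (j *\<^sub>v x)) + cnj (2 * s) * (2 * s) * (conjugate w \<bullet> (j *\<^sub>v w))"
    unfolding jform_def using x w jx jw
    by (simp add: conjugate_add_vec[of _ n] conjugate_smult_vec mult_add_distrib_mat_vec[of _ n n]
        mult_mat_vec[of _ n n] add_scalar_prod_distrib[of _ n] scalar_prod_add_distrib[of _ n] algebra_simps)
  also have "\<dots> = cnj (1 - s) * (1 - s) * jform j x
      + (cnj (1 - s) * (2 * s) + cnj (2 * s) * (1 - s) + cnj (2 * s) * (2 * s)) * (conjugate y \<bullet> y)"
    unfolding xw wx ww jform_def by (simp add: algebra_simps)
  also have "cnj (1 - s) * (2 * s) + cnj (2 * s) * (1 - s) + cnj (2 * s) * (2 * s) = of_real (4 * Re s)"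
    by (simp add: complex_eq_iff algebra_simps)
  finally show ?thesis unfolding step .
qed

lemma Re_jform_reflection_step:
  assumes x: "x \<in> carrier_vec n"
  defines "y \<equiv> u *\<^sub>v (j *\<^sub>v x)"
  shows "Re (jform j (x + s \<cdot>\<^sub>v (reflection_mat j u *\<^sub>v x))) =
    (cmod (1 - s))\<^sup>2 * Re (jform j x) + 4 * Re s * Re (conjugate y \<bullet> y)"
proof -
  have "cnj (1 - s) * (1 - s) = of_real ((cmod (1 - s))\<^sup>2)"
    using complex_norm_square[of "1 - s"] by (simp add: mult.commute)
  then show ?thesis unfolding jform_reflection_step[OF x, of s, folded y_def] by simp
qed

lemma reflection_step_preserves_cone:
  assumes x: "x \<in> carrier_vec n" and s: "Re s < 0" and cone: "Re (jform j x) \<le> 0"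
  shows "Re (jform j (x + s \<cdot>\<^sub>v (reflection_mat j u *\<^sub>v x))) \<le> 0"
    and "x \<noteq> 0\<^sub>v n \<Longrightarrow> x + s \<cdot>\<^sub>v (reflection_mat j u *\<^sub>v x) \<noteq> 0\<^sub>v n"
proof -
  define y where "y = u *\<^sub>v (j *\<^sub>v x)"
  have y: "y \<in> carrier_vec m" using x by (simp add: y_def)
  note Re_step = Re_jform_reflection_step[OF x, of s, folded y_def]
  have first: "(cmod (1 - s))\<^sup>2 * Re (jform j x) \<le> 0"
    using cone by (simp add: mult_nonneg_nonpos)
  have second: "4 * Re s * Re (conjugate y \<bullet> y) \<le> 0"
    using s sprod_conjugate_self_Re_nonneg[of y] by (simp add: mult_nonpos_nonneg)
  show "Re (jform j (x + s \<cdot>\<^sub>v (reflection_mat j u *\<^sub>v x))) \<le> 0"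
    unfolding Re_step using first second by linarith
  assume x0: "x \<noteq> 0\<^sub>v n"
  show "x + s \<cdot>\<^sub>v (reflection_mat j u *\<^sub>v x) \<noteq> 0\<^sub>v n"
  proof
    assume zero: "x + s \<cdot>\<^sub>v (reflection_mat j u *\<^sub>v x) = 0\<^sub>v n"
    then have "Re (jform j (x + s \<cdot>\<^sub>v (reflection_mat j u *\<^sub>v x))) = 0"
      by (simp add: jform_def)
    then have "4 * Re s * Re (conjugate y \<bullet> y) = 0"
      using Re_step first second by linarith
    then have "y = 0\<^sub>v m"
      using s sprod_conjugate_self_eq_0_iff[OF y] by simp
    then have "x + s \<cdot>\<^sub>v (reflection_mat j u *\<^sub>v x) = (1 - s) \<cdot>\<^sub>v x"
      unfolding reflection_mult_vec[OF x] y_def[symmetric] using x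
      by (intro eq_vecI) (simp_all add: algebra_simps)
    with zero have "(1 - s) \<cdot>\<^sub>v x = 0\<^sub>v n" by simp
    moreover have "1 - s \<noteq> 0" using s by auto
    ultimately show False using x0 smult_vec_eq_0_iff[OF x] by blast
  qed
qed

end

section \<open>Transfer matrices\<close>

lemma normalized_row_block:
  assumes b: "b \<in> carrier_mat p (2*p)" and bJ: "b * Jmat p * mat_adjoint b = 1\<^sub>m p"
  shows "signature_row_block (2*p) p (jmat p) (b * Kmat p)"
proof
  have K: "Kmat p \<in> carrier_mat (2*p) (2*p)" and j: "jmat p \<in> carrier_mat (2*p) (2*p)"
    and K': "mat_adjoint (Kmat p) \<in> carrier_mat (2*p) (2*p)" and b': "mat_adjoint b \<in> carrier_mat (2*p) p"
    using b by simp_all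
  have Kj: "Kmat p * jmat p \<in> carrier_mat (2*p) (2*p)" by (rule mult_carrier_mat[OF K j])
  have KjK: "Kmat p * jmat p * mat_adjoint (Kmat p) \<in> carrier_mat (2*p) (2*p)"
    by (rule mult_carrier_mat[OF Kj K'])
  have Kb: "mat_adjoint (Kmat p) * mat_adjoint b \<in> carrier_mat (2*p) p"
    by (rule mult_carrier_mat[OF K' b'])
  have "b * Kmat p * jmat p * mat_adjoint (b * Kmat p) = b * (Kmat p * jmat p) * (mat_adjoint (Kmat p) * mat_adjoint b)"
    by (simp add: mat_adjoint_mult[OF b K] assoc_mult_mat[OF b K j])
  also have "\<dots> = b * ((Kmat p * jmat p * mat_adjoint (Kmat p)) * mat_adjoint b)"
    by (simp add: assoc_mult_mat[OF b Kj Kb] assoc_mult_mat[OF Kj K' b'])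
  also have "\<dots> = b * Jmat p * mat_adjoint b"
    by (simp add: Kmat_jmat_adjoint assoc_mult_mat[OF b Jmat_carrier b'])
  finally show "b * Kmat p * jmat p * mat_adjoint (b * Kmat p) = 1\<^sub>m p"
    using bJ by simp
  show "b * Kmat p \<in> carrier_mat p (2*p)" by (rule mult_carrier_mat[OF b K])
qed (simp_all add: jmat_mult_jmat mat_adjoint_jmat)

lemma Cmat_eq_gram:
  assumes "\<beta> k \<in> carrier_mat p (2*p)"
  shows "Cmat p \<beta> k = 2 \<cdot>\<^sub>m (mat_adjoint (\<beta> k * Kmat p) * (\<beta> k * Kmat p)) - jmat p"
proof -
  have KB: "mat_adjoint (Kmat p) * mat_adjoint (\<beta> k) \<in> carrier_mat (2*p) p"
    using assms by (intro mult_carrier_mat[of _ _ "2*p"]) simp_all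
  have "mat_adjoint (Kmat p) * mat_adjoint (\<beta> k) * \<beta> k * Kmat p
      = mat_adjoint (Kmat p) * mat_adjoint (\<beta> k) * (\<beta> k * Kmat p)"
    by (rule assoc_mult_mat[OF KB assms Kmat_carrier])
  then show ?thesis
    unfolding Cmat_def mat_adjoint_mult[OF assms Kmat_carrier] by simp
qed

lemma Cmat_carrier[simp]: "Cmat p \<beta> k \<in> carrier_mat (2*p) (2*p)"
  unfolding Cmat_def by (simp add: minus_carrier_mat)

lemma Cmat_dims[simp]: "dim_row (Cmat p \<beta> k) = 2*p" "dim_col (Cmat p \<beta> k) = 2*p"
  using Cmat_carrier by blast+

lemma Cmat_mult_jmat_carrier[simp]: "Cmat p \<beta> k * jmat p \<in> carrier_mat (2*p) (2*p)"
  by (rule mult_carrier_mat[OF Cmat_carrier jmat_carrier])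

lemma Cmat_mult_jmat:
  "\<beta> k \<in> carrier_mat p (2*p) \<Longrightarrow> Cmat p \<beta> k * jmat p = reflection_mat (jmat p) (\<beta> k * Kmat p)"
  unfolding reflection_mat_def by (simp add: Cmat_eq_gram)

lemma jmat_mult_Cmat_carrier[simp]: "jmat p * Cmat p \<beta> k \<in> carrier_mat (2*p) (2*p)"
  by (rule mult_carrier_mat[OF jmat_carrier Cmat_carrier])

lemma Cmat_hermitian:
  assumes "\<beta> k \<in> carrier_mat p (2*p)"
  shows "mat_adjoint (Cmat p \<beta> k) = Cmat p \<beta> k"
proof -
  define u where "u = \<beta> k * Kmat p"
  have u: "u \<in> carrier_mat p (2*p)" using assms by (simp add: u_def)
  have uu: "mat_adjoint u * u \<in> carrier_mat (2*p) (2*p)" by (rule mult_carrier_mat[OF mat_adjoint_carrier[OF u] u])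
  have "mat_adjoint (mat_adjoint u * u) = mat_adjoint u * u"
    using mat_adjoint_mult[OF mat_adjoint_carrier[OF u] u] by simp
  then show ?thesis
    unfolding Cmat_eq_gram[where \<beta>=\<beta> and k=k and p=p, OF assms, folded u_def]
    using uu by (simp add: mat_adjoint_minus[of _ "2*p" "2*p"] mat_adjoint_smult mat_adjoint_jmat)
qed

definition transfer_step :: "nat \<Rightarrow> (nat \<Rightarrow> complex mat) \<Rightarrow> nat \<Rightarrow> complex \<Rightarrow> complex mat" where
  "transfer_step p \<beta> k s = 1\<^sub>m (2*p) + s \<cdot>\<^sub>m (Cmat p \<beta> k * jmat p)"

fun transfer_prod :: "nat \<Rightarrow> (nat \<Rightarrow> complex mat) \<Rightarrow> nat \<Rightarrow> nat \<Rightarrow> complex \<Rightarrow> complex mat" where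
  "transfer_prod p \<beta> a 0 s = 1\<^sub>m (2*p)"
| "transfer_prod p \<beta> a (Suc n) s = transfer_prod p \<beta> a n s * transfer_step p \<beta> (a + n) s"

fun transfer_coprod :: "nat \<Rightarrow> (nat \<Rightarrow> complex mat) \<Rightarrow> nat \<Rightarrow> nat \<Rightarrow> complex \<Rightarrow> complex mat" where
  "transfer_coprod p \<beta> a 0 s = 1\<^sub>m (2*p)"
| "transfer_coprod p \<beta> a (Suc n) s = transfer_step p \<beta> (a + n) (- s) * transfer_coprod p \<beta> a n s"

lemma transfer_step_carrier[simp]: "transfer_step p \<beta> k s \<in> carrier_mat (2*p) (2*p)"
  unfolding transfer_step_def by simp

lemma transfer_prod_carrier[simp]: "transfer_prod p \<beta> a n s \<in> carrier_mat (2*p) (2*p)"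
  by (induction n) (simp_all add: mult_carrier_mat[OF _ transfer_step_carrier])

lemma transfer_coprod_carrier[simp]: "transfer_coprod p \<beta> a n s \<in> carrier_mat (2*p) (2*p)"
  by (induction n) (simp_all add: mult_carrier_mat[OF transfer_step_carrier])

lemma transfer_step_mult_vec:
  assumes "\<beta> k \<in> carrier_mat p (2*p)" "x \<in> carrier_vec (2*p)"
  shows "transfer_step p \<beta> k s *\<^sub>v x = x + s \<cdot>\<^sub>v (reflection_mat (jmat p) (\<beta> k * Kmat p) *\<^sub>v x)"
proof -
  have "transfer_step p \<beta> k s *\<^sub>v x = x + s \<cdot>\<^sub>v ((Cmat p \<beta> k * jmat p) *\<^sub>v x)"
    unfolding transfer_step_def by (rule one_smult_mult_vec[OF Cmat_mult_jmat_carrier assms(2)])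
  then show ?thesis by (simp only: Cmat_mult_jmat[where \<beta>=\<beta> and k=k and p=p, OF assms(1)])
qed

lemma transfer_coprod_mult_prod:
  assumes "\<And>k. a \<le> k \<Longrightarrow> k < a + n \<Longrightarrow> \<beta> k \<in> carrier_mat p (2*p)"
    and "\<And>k. a \<le> k \<Longrightarrow> k < a + n \<Longrightarrow> \<beta> k * Jmat p * mat_adjoint (\<beta> k) = 1\<^sub>m p"
  shows "transfer_coprod p \<beta> a n s * transfer_prod p \<beta> a n s = ((1 - s\<^sup>2) ^ n) \<cdot>\<^sub>m 1\<^sub>m (2*p)"
  using assms
proof (induction n)
  case 0
  show ?case by (intro eq_matI) auto
next
  case (Suc n)
  let ?B = "\<lambda>s. transfer_step p \<beta> (a + n) s" and ?V = "transfer_coprod p \<beta> a n s"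
    and ?U = "transfer_prod p \<beta> a n s" and ?d = "(1 - s\<^sup>2) ^ n"
  interpret signature_row_block "2*p" p "jmat p" "\<beta> (a + n) * Kmat p"
    by (rule normalized_row_block) (use Suc.prems in simp_all)
  have BB: "?B (- s) * ?B s = (1 - s\<^sup>2) \<cdot>\<^sub>m 1\<^sub>m (2*p)"
    using involution_factors_mult[OF reflection_carrier reflection_involutive, of s]
    by (simp add: transfer_step_def Cmat_mult_jmat Suc.prems)
  have "transfer_coprod p \<beta> a (Suc n) s * transfer_prod p \<beta> a (Suc n) s = ?B (- s) * (?V * (?U * ?B s))"
    by (simp add: assoc_mult_mat[OF transfer_step_carrier transfer_coprod_carrier
          mult_carrier_mat[OF transfer_prod_carrier transfer_step_carrier]])
  also have "\<dots> = ?B (- s) * (?V * ?U) * ?B s"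
    by (simp add: assoc_mult_mat[OF transfer_coprod_carrier transfer_prod_carrier transfer_step_carrier]
        assoc_mult_mat[OF transfer_step_carrier mult_carrier_mat[OF transfer_coprod_carrier transfer_prod_carrier]
          transfer_step_carrier])
  also have "\<dots> = ?d \<cdot>\<^sub>m (?B (- s) * ?B s)"
    using Suc by (simp add: mult_smult_distrib[OF transfer_step_carrier one_carrier_mat]
        right_mult_one_mat[OF transfer_step_carrier] mult_smult_assoc_mat[OF transfer_step_carrier transfer_step_carrier])
  also have "\<dots> = ((1 - s\<^sup>2) ^ Suc n) \<cdot>\<^sub>m 1\<^sub>m (2*p)"
    unfolding BB by (intro eq_matI) simp_all
  finally show ?case .
qed

lemma transfer_prod_add:
  "transfer_prod p \<beta> a (n + m) s = transfer_prod p \<beta> a n s * transfer_prod p \<beta> (a + n) m s"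
proof (induction m)
  case (Suc m)
  then show ?case
    by (simp add: add.assoc assoc_mult_mat[of _ "2*p" "2*p" _ "2*p" _ "2*p"])
qed (simp add: right_mult_one_mat[OF transfer_prod_carrier])

lemma Wsol_carrier[simp]: "Wsol p \<beta> k w \<in> carrier_mat (2*p) (2*p)"
  by (induction k) (simp_all add: mult_carrier_mat[OF jmat_mult_Cmat_carrier])

lemma mat_adjoint_Wsol:
  assumes "\<And>k. k < n \<Longrightarrow> \<beta> k \<in> carrier_mat p (2*p)"
  shows "mat_adjoint (Wsol p \<beta> n (cnj z)) = transfer_prod p \<beta> 0 n (\<i> / z)"
  using assms
proof (induction n)
  case (Suc n)
  let ?W = "Wsol p \<beta> n (cnj z)" and ?C = "Cmat p \<beta> n" and ?j = "jmat p"
  have jC: "?j * ?C \<in> carrier_mat (2*p) (2*p)" by simp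
  have jCW: "?j * ?C * ?W \<in> carrier_mat (2*p) (2*p)" by (rule mult_carrier_mat[OF jC Wsol_carrier])
  have "mat_adjoint (?j * ?C * ?W) = mat_adjoint ?W * (?C * ?j)"
    using Suc.prems
    by (simp add: mat_adjoint_mult[OF jC Wsol_carrier] mat_adjoint_mult[OF jmat_carrier Cmat_carrier]
        Cmat_hermitian mat_adjoint_jmat)
  then have "mat_adjoint (Wsol p \<beta> (Suc n) (cnj z)) = mat_adjoint ?W + (\<i> / z) \<cdot>\<^sub>m (mat_adjoint ?W * (?C * ?j))"
    by (simp add: mat_adjoint_add[OF Wsol_carrier smult_carrier_mat[OF jCW]] mat_adjoint_smult)
  also have "\<dots> = mat_adjoint ?W * transfer_step p \<beta> n (\<i> / z)"
  proof -
    have W': "mat_adjoint ?W \<in> carrier_mat (2*p) (2*p)" by simp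
    show ?thesis
      unfolding transfer_step_def
      by (simp add: mult_add_distrib_mat[OF W' one_carrier_mat smult_carrier_mat[OF Cmat_mult_jmat_carrier]]
          mult_smult_distrib[OF W' Cmat_mult_jmat_carrier] right_mult_one_mat[OF W'])
  qed
  finally show ?case using Suc by simp
qed simp

lemma WW_eq_transfer_prod:
  assumes "\<And>k. k \<le> L \<Longrightarrow> \<beta> k \<in> carrier_mat p (2*p)"
  shows "WW p \<beta> L z = Kmat p * transfer_prod p \<beta> 0 (Suc L) (\<i> / z)"
  unfolding WW_def using assms by (subst mat_adjoint_Wsol) auto

lemma WW_split:
  assumes "\<And>k. k \<le> N \<Longrightarrow> \<beta> k \<in> carrier_mat p (2*p)" and "M < N"
  shows "WW p \<beta> N z = WW p \<beta> M z * transfer_prod p \<beta> (Suc M) (N - M) (\<i> / z)"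
proof -
  have "Suc N = Suc M + (N - M)" using assms(2) by simp
  then have split: "transfer_prod p \<beta> 0 (Suc N) (\<i> / z) =
      transfer_prod p \<beta> 0 (Suc M) (\<i> / z) * transfer_prod p \<beta> (Suc M) (N - M) (\<i> / z)"
    by (metis transfer_prod_add add_0)
  have "WW p \<beta> N z = Kmat p * transfer_prod p \<beta> 0 (Suc N) (\<i> / z)"
    by (rule WW_eq_transfer_prod) (use assms in auto)
  also have "\<dots> = Kmat p * transfer_prod p \<beta> 0 (Suc M) (\<i> / z) * transfer_prod p \<beta> (Suc M) (N - M) (\<i> / z)"
    unfolding split by (rule assoc_mult_mat[OF Kmat_carrier transfer_prod_carrier transfer_prod_carrier, symmetric])
  also have "Kmat p * transfer_prod p \<beta> 0 (Suc M) (\<i> / z) = WW p \<beta> M z"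
    by (rule WW_eq_transfer_prod[symmetric]) (use assms in auto)
  finally show ?thesis .
qed

lemma Re_i_div_neg: "Im z < 0 \<Longrightarrow> Re (\<i> / z) < 0"
  by (simp add: Re_divide divide_neg_pos add_nonneg_pos)

lemma transfer_prod_preserves_cone:
  assumes "\<And>k. a \<le> k \<Longrightarrow> k < a + n \<Longrightarrow> \<beta> k \<in> carrier_mat p (2*p)"
    and "\<And>k. a \<le> k \<Longrightarrow> k < a + n \<Longrightarrow> \<beta> k * Jmat p * mat_adjoint (\<beta> k) = 1\<^sub>m p"
    and s: "Re s < 0"
  shows "x \<in> carrier_vec (2*p) \<Longrightarrow> Re (jform (jmat p) x) \<le> 0 \<Longrightarrow> x \<noteq> 0\<^sub>v (2*p) \<Longrightarrow>
    Re (jform (jmat p) (transfer_prod p \<beta> a n s *\<^sub>v x)) \<le> 0 \<and> transfer_prod p \<beta> a n s *\<^sub>v x \<noteq> 0\<^sub>v (2*p)"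
  using assms(1,2)
proof (induction n arbitrary: x)
  case (Suc n)
  let ?B = "transfer_step p \<beta> (a + n) s"
  have b: "\<beta> (a + n) \<in> carrier_mat p (2*p)" using Suc.prems by simp
  interpret signature_row_block "2*p" p "jmat p" "\<beta> (a + n) * Kmat p"
    by (rule normalized_row_block) (use Suc.prems in simp_all)
  have Bx: "?B *\<^sub>v x \<in> carrier_vec (2*p)"
    using Suc.prems(1) by (rule mult_mat_vec_carrier[OF transfer_step_carrier])
  have "Re (jform (jmat p) (?B *\<^sub>v x)) \<le> 0" "?B *\<^sub>v x \<noteq> 0\<^sub>v (2*p)"
    unfolding transfer_step_mult_vec[where \<beta>=\<beta> and k="a + n", OF b Suc.prems(1)]
    using reflection_step_preserves_cone[OF Suc.prems(1) s Suc.prems(2)] Suc.prems(3) by simp_all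
  then have "Re (jform (jmat p) (transfer_prod p \<beta> a n s *\<^sub>v (?B *\<^sub>v x))) \<le> 0 \<and>
      transfer_prod p \<beta> a n s *\<^sub>v (?B *\<^sub>v x) \<noteq> 0\<^sub>v (2*p)"
    by (intro Suc.IH[OF Bx]) (use Suc.prems in simp_all)
  then show ?case
    using Suc.prems(1) by (simp add: assoc_mult_mat_vec[OF transfer_prod_carrier transfer_step_carrier])
qed simp

lemma holomorphic_on_mult_mat_index:
  assumes "\<And>s. A s \<in> carrier_mat n k" "\<And>s. B s \<in> carrier_mat k m"
    and "\<And>i l. i < n \<Longrightarrow> l < k \<Longrightarrow> (\<lambda>s. A s $$ (i,l)) holomorphic_on S"
    and "\<And>l j. l < k \<Longrightarrow> j < m \<Longrightarrow> (\<lambda>s. B s $$ (l,j)) holomorphic_on S"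
    and "i < n" "j < m"
  shows "(\<lambda>s. (A s * B s) $$ (i,j)) holomorphic_on S"
proof -
  have "(\<lambda>s. (A s * B s) $$ (i,j)) = (\<lambda>s. \<Sum>l<k. A s $$ (i,l) * B s $$ (l,j))"
    by (intro ext index_mult_mat_sum[OF assms(1,2,5,6)])
  moreover have "(\<lambda>s. \<Sum>l<k. A s $$ (i,l) * B s $$ (l,j)) holomorphic_on S"
    using assms(3-6) by (intro holomorphic_on_sum holomorphic_on_mult) auto
  ultimately show ?thesis by simp
qed

lemma transfer_step_index:
  "i < 2*p \<Longrightarrow> j < 2*p \<Longrightarrow>
    transfer_step p \<beta> k s $$ (i,j) = (if i = j then 1 else 0) + s * (Cmat p \<beta> k * jmat p) $$ (i,j)"
  unfolding transfer_step_def by auto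

lemma transfer_step_holomorphic:
  "i < 2*p \<Longrightarrow> j < 2*p \<Longrightarrow> (\<lambda>s. transfer_step p \<beta> k (c * s) $$ (i,j)) holomorphic_on S"
  by (simp add: transfer_step_index holomorphic_intros)

lemma transfer_prod_holomorphic:
  "i < 2*p \<Longrightarrow> j < 2*p \<Longrightarrow> (\<lambda>s. transfer_prod p \<beta> a n s $$ (i,j)) holomorphic_on S"
proof (induction n arbitrary: i j)
  case (Suc n)
  then show ?case
    by (simp only: transfer_prod.simps)
      (rule holomorphic_on_mult_mat_index[OF transfer_prod_carrier transfer_step_carrier Suc.IH
          transfer_step_holomorphic[where c=1, simplified]])
qed simp

lemma transfer_coprod_holomorphic:
  "i < 2*p \<Longrightarrow> j < 2*p \<Longrightarrow> (\<lambda>s. transfer_coprod p \<beta> a n s $$ (i,j)) holomorphic_on S"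
proof (induction n arbitrary: i j)
  case (Suc n)
  then show ?case
    by (simp only: transfer_coprod.simps)
      (rule holomorphic_on_mult_mat_index[OF transfer_step_carrier transfer_coprod_carrier
          transfer_step_holomorphic[where c="-1", simplified] Suc.IH])
qed simp

definition stack :: "nat \<Rightarrow> complex mat \<Rightarrow> complex mat \<Rightarrow> complex mat" where
  "stack p X Y = mat (2*p) p (\<lambda>(l,c). if l < p then X $$ (l,c) else Y $$ (l - p, c))"

definition upper_block :: "nat \<Rightarrow> complex mat \<Rightarrow> complex mat" where
  "upper_block p A = mat p p (\<lambda>(a,b). A $$ (a,b))"

definition lower_block :: "nat \<Rightarrow> complex mat \<Rightarrow> complex mat" where
  "lower_block p A = mat p p (\<lambda>(a,b). A $$ (a + p, b))"

lemma stack_carrier[simp]: "stack p X Y \<in> carrier_mat (2*p) p"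
  and stack_dims[simp]: "dim_row (stack p X Y) = 2*p" "dim_col (stack p X Y) = p"
  unfolding stack_def by simp_all

lemma stack_index:
  "l < 2*p \<Longrightarrow> c < p \<Longrightarrow> stack p X Y $$ (l,c) = (if l < p then X $$ (l,c) else Y $$ (l - p, c))"
  unfolding stack_def by simp

lemma block_row_mult_stack:
  assumes A: "A \<in> carrier_mat (2*p) (2*p)" and X: "X \<in> carrier_mat p p" and Y: "Y \<in> carrier_mat p p"
  shows "mat p p (\<lambda>(r,c). A $$ (r, c)) * X + mat p p (\<lambda>(r,c). A $$ (r, c + p)) * Y
      = upper_block p (A * stack p X Y)"
    and "mat p p (\<lambda>(r,c). A $$ (r + p, c)) * X + mat p p (\<lambda>(r,c). A $$ (r + p, c + p)) * Y
      = lower_block p (A * stack p X Y)"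
  using A X Y
  by (auto intro!: eq_matI simp del: index_mult_mat(1)
      simp: upper_block_def lower_block_def index_mult_mat_double[OF A stack_carrier]
        index_mult_mat_sum[of _ p p _ p] stack_index)

lemma WW_carrier[simp]: "WW p \<beta> L z \<in> carrier_mat (2*p) (2*p)"
  unfolding WW_def by (rule mult_carrier_mat[OF Kmat_carrier mat_adjoint_carrier[OF Wsol_carrier]])

lemma WWblock_mult_stack:
  assumes "X \<in> carrier_mat p p" "Y \<in> carrier_mat p p"
  shows "WWblock p \<beta> L 1 1 z * X + WWblock p \<beta> L 1 2 z * Y = upper_block p (WW p \<beta> L z * stack p X Y)"
    and "WWblock p \<beta> L 2 1 z * X + WWblock p \<beta> L 2 2 z * Y = lower_block p (WW p \<beta> L z * stack p X Y)"
proof -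
  from block_row_mult_stack[OF WW_carrier assms]
  show "WWblock p \<beta> L 1 1 z * X + WWblock p \<beta> L 1 2 z * Y = upper_block p (WW p \<beta> L z * stack p X Y)"
    and "WWblock p \<beta> L 2 1 z * X + WWblock p \<beta> L 2 2 z * Y = lower_block p (WW p \<beta> L z * stack p X Y)"
    unfolding WWblock_def by simp_all
qed

definition admissible_pair :: "nat \<Rightarrow> complex mat \<Rightarrow> complex mat \<Rightarrow> bool" where
  "admissible_pair p X Y \<longleftrightarrow> pos_def_mat p (mat_adjoint X * X + mat_adjoint Y * Y) \<and>
     pos_semidef_mat p (mat_adjoint Y * Y - mat_adjoint X * X)"

lemma sprod_conjugate_sum:
  "dim_vec x = n \<Longrightarrow> dim_vec y = n \<Longrightarrow> conjugate x \<bullet> y = (\<Sum>i<n. cnj (x $ i) * y $ i)"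
  by (simp add: scalar_prod_def atLeast0LessThan)

lemma gram_quadratic_form:
  assumes X: "X \<in> carrier_mat n m" and v: "v \<in> carrier_vec m"
  shows "conjugate v \<bullet> ((mat_adjoint X * X) *\<^sub>v v) = conjugate (X *\<^sub>v v) \<bullet> (X *\<^sub>v v)"
  using mat_adjoint_mult_vec_sprod[OF mat_adjoint_carrier[OF X] v mult_mat_vec_carrier[OF X v]]
  by (simp add: assoc_mult_mat_vec[OF mat_adjoint_carrier[OF X] X v])

lemma jmat_mult_vec_index:
  assumes "x \<in> carrier_vec (2*p)" "l < 2*p"
  shows "(jmat p *\<^sub>v x) $ l = (if l < p then x $ l else - x $ l)"
proof -
  have "(jmat p *\<^sub>v x) $ l = (\<Sum>m\<in>{0..<2*p}. jmat p $$ (l,m) * x $ m)"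
    using assms by (simp add: scalar_prod_def)
  also have "\<dots> = (\<Sum>m\<in>{0..<2*p}. if m = l then (if l < p then x $ l else - x $ l) else 0)"
    by (rule sum.cong) (use assms in \<open>auto simp: jmat_def\<close>)
  also have "\<dots> = (if l < p then x $ l else - x $ l)" using assms by (simp add: sum.delta')
  finally show ?thesis .
qed

lemma stack_quadratic_forms:
  assumes X: "X \<in> carrier_mat p p" and Y: "Y \<in> carrier_mat p p" and v: "v \<in> carrier_vec p"
  defines "x \<equiv> stack p X Y *\<^sub>v v"
  shows "conjugate v \<bullet> ((mat_adjoint X * X + mat_adjoint Y * Y) *\<^sub>v v) = conjugate x \<bullet> x"
    and "conjugate v \<bullet> ((mat_adjoint Y * Y - mat_adjoint X * X) *\<^sub>v v) = - jform (jmat p) x"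
proof -
  have XX: "mat_adjoint X * X \<in> carrier_mat p p" and YY: "mat_adjoint Y * Y \<in> carrier_mat p p"
    using X Y by (simp_all add: mult_carrier_mat[OF mat_adjoint_carrier])
  have Xv: "X *\<^sub>v v \<in> carrier_vec p" and Yv: "Y *\<^sub>v v \<in> carrier_vec p" using X Y v by simp_all
  have cv: "conjugate v \<in> carrier_vec p" using v by simp
  have x_top: "x $ l = (X *\<^sub>v v) $ l" and x_bot: "x $ (l + p) = (Y *\<^sub>v v) $ l" if "l < p" for l
    using that X Y v by (simp_all add: x_def scalar_prod_def stack_index)
  have jx: "(jmat p *\<^sub>v x) $ l = (if l < p then x $ l else - x $ l)" if "l < 2*p" for l
    unfolding x_def by (rule jmat_mult_vec_index[OF mult_mat_vec_carrier[OF stack_carrier v] that])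
  have dims: "dim_vec x = 2*p" "dim_vec (X *\<^sub>v v) = p" "dim_vec (Y *\<^sub>v v) = p"
    using X Y by (simp_all add: x_def)
  have jdim: "dim_vec (jmat p *\<^sub>v x) = 2*p" by simp
  have "conjugate x \<bullet> x = (\<Sum>l<p. cnj (x $ l) * x $ l) + (\<Sum>l<p. cnj (x $ (l + p)) * x $ (l + p))"
    by (simp only: sprod_conjugate_sum[OF dims(1) dims(1)] sum_lessThan_double)
  also have "\<dots> = conjugate (X *\<^sub>v v) \<bullet> (X *\<^sub>v v) + conjugate (Y *\<^sub>v v) \<bullet> (Y *\<^sub>v v)"
    unfolding sprod_conjugate_sum[OF dims(2) dims(2)] sprod_conjugate_sum[OF dims(3) dims(3)]
    by (intro arg_cong2[where f = "(+)"] sum.cong) (simp_all add: x_top x_bot)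
  finally have "conjugate x \<bullet> x = conjugate (X *\<^sub>v v) \<bullet> (X *\<^sub>v v) + conjugate (Y *\<^sub>v v) \<bullet> (Y *\<^sub>v v)" .
  then show "conjugate v \<bullet> ((mat_adjoint X * X + mat_adjoint Y * Y) *\<^sub>v v) = conjugate x \<bullet> x"
    by (simp add: add_mult_distrib_mat_vec[OF XX YY v] scalar_prod_add_distrib[OF cv]
        gram_quadratic_form[OF X v] gram_quadratic_form[OF Y v] mult_mat_vec_carrier[OF XX v]
        mult_mat_vec_carrier[OF YY v])
  have "jform (jmat p) x =
      (\<Sum>l<p. cnj (x $ l) * (jmat p *\<^sub>v x) $ l) + (\<Sum>l<p. cnj (x $ (l + p)) * (jmat p *\<^sub>v x) $ (l + p))"
    by (simp only: jform_def sprod_conjugate_sum[OF dims(1) jdim] sum_lessThan_double)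
  also have "\<dots> = conjugate (X *\<^sub>v v) \<bullet> (X *\<^sub>v v) + - (conjugate (Y *\<^sub>v v) \<bullet> (Y *\<^sub>v v))"
    unfolding sprod_conjugate_sum[OF dims(2) dims(2)] sprod_conjugate_sum[OF dims(3) dims(3)] sum_negf[symmetric]
    by (intro arg_cong2[where f = "(+)"] sum.cong) (simp_all del: index_mult_mat_vec add: jx x_top x_bot)
  finally have "jform (jmat p) x = conjugate (X *\<^sub>v v) \<bullet> (X *\<^sub>v v) - conjugate (Y *\<^sub>v v) \<bullet> (Y *\<^sub>v v)"
    by simp
  then show "conjugate v \<bullet> ((mat_adjoint Y * Y - mat_adjoint X * X) *\<^sub>v v) = - jform (jmat p) x"
    by (simp add: minus_mult_distrib_mat_vec[OF YY XX v] scalar_prod_minus_distrib[OF cv]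
        gram_quadratic_form[OF X v] gram_quadratic_form[OF Y v] mult_mat_vec_carrier[OF XX v]
        mult_mat_vec_carrier[OF YY v])
qed

lemma gram_hermitian: "X \<in> carrier_mat n m \<Longrightarrow> mat_adjoint (mat_adjoint X * X) = mat_adjoint X * X"
  by (simp add: mat_adjoint_mult[of _ m n _ m])

lemma admissible_pair_iff_cone:
  assumes X: "X \<in> carrier_mat p p" and Y: "Y \<in> carrier_mat p p"
  shows "admissible_pair p X Y \<longleftrightarrow> (\<forall>v \<in> carrier_vec p. v \<noteq> 0\<^sub>v p \<longrightarrow>
    stack p X Y *\<^sub>v v \<noteq> 0\<^sub>v (2*p) \<and> Re (jform (jmat p) (stack p X Y *\<^sub>v v)) \<le> 0)"
    (is "_ \<longleftrightarrow> (\<forall>v \<in> carrier_vec p. v \<noteq> 0\<^sub>v p \<longrightarrow> ?x v \<noteq> 0\<^sub>v (2*p) \<and> _)")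
proof -
  have x: "?x v \<in> carrier_vec (2*p)" if "v \<in> carrier_vec p" for v
    using that by (rule mult_mat_vec_carrier[OF stack_carrier])
  have XX: "mat_adjoint X * X \<in> carrier_mat p p" and YY: "mat_adjoint Y * Y \<in> carrier_mat p p"
    using X Y by (simp_all add: mult_carrier_mat[OF mat_adjoint_carrier])
  have hermitian: "mat_adjoint (mat_adjoint X * X + mat_adjoint Y * Y) = mat_adjoint X * X + mat_adjoint Y * Y"
    "mat_adjoint (mat_adjoint Y * Y - mat_adjoint X * X) = mat_adjoint Y * Y - mat_adjoint X * X"
    by (simp_all add: mat_adjoint_add[OF XX YY] mat_adjoint_minus[OF YY XX] gram_hermitian[OF X] gram_hermitian[OF Y])
  have "pos_def_mat p (mat_adjoint X * X + mat_adjoint Y * Y) \<longleftrightarrow>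
      (\<forall>v \<in> carrier_vec p. v \<noteq> 0\<^sub>v p \<longrightarrow> ?x v \<noteq> 0\<^sub>v (2*p))"
    unfolding pos_def_mat_def
    by (simp add: stack_quadratic_forms(1)[OF X Y] hermitian add_carrier_mat[OF YY]
        sprod_conjugate_self_Re_pos_iff[OF x])
  moreover have "pos_semidef_mat p (mat_adjoint Y * Y - mat_adjoint X * X) \<longleftrightarrow>
      (\<forall>v \<in> carrier_vec p. v \<noteq> 0\<^sub>v p \<longrightarrow> Re (jform (jmat p) (?x v)) \<le> 0)"
  proof -
    have "?x (0\<^sub>v p) = 0\<^sub>v (2*p)"
      by (intro eq_vecI) (simp_all add: scalar_prod_def)
    then have "Re (jform (jmat p) (?x (0\<^sub>v p))) = 0"
      by (simp add: jform_def scalar_prod_def)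
    then show ?thesis
      by (auto simp: pos_semidef_mat_def stack_quadratic_forms(2)[OF X Y] hermitian minus_carrier_mat[OF XX])
  qed
  ultimately show ?thesis unfolding admissible_pair_def by blast
qed

lemma admissible_pair_transfer:
  assumes X: "X \<in> carrier_mat p p" and Y: "Y \<in> carrier_mat p p"
    and X': "X' \<in> carrier_mat p p" and Y': "Y' \<in> carrier_mat p p"
    and U: "U \<in> carrier_mat (2*p) (2*p)"
    and cone: "\<And>x. x \<in> carrier_vec (2*p) \<Longrightarrow> Re (jform (jmat p) x) \<le> 0 \<Longrightarrow> x \<noteq> 0\<^sub>v (2*p) \<Longrightarrow>
      Re (jform (jmat p) (U *\<^sub>v x)) \<le> 0 \<and> U *\<^sub>v x \<noteq> 0\<^sub>v (2*p)"
    and image: "stack p X' Y' = U * stack p X Y"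
    and adm: "admissible_pair p X Y"
  shows "admissible_pair p X' Y'"
  using adm cone mult_mat_vec_carrier[OF stack_carrier]
  unfolding admissible_pair_iff_cone[OF X Y] admissible_pair_iff_cone[OF X' Y'] image
  by (simp add: assoc_mult_mat_vec[OF U stack_carrier])

section \<open>Regularity of meromorphic matrix functions\<close>

lemma not_is_pole_iff_convergent:
  assumes "f meromorphic_on A" "z \<in> A"
  shows "\<not> is_pole f z \<longleftrightarrow> (\<exists>c. (f \<longlongrightarrow> c) (at z))"
proof
  have "f meromorphic_on {z}" using meromorphic_on_subset[OF assms(1)] assms(2) by blast
  then have "not_essential f z" by (rule meromorphic_on_not_essential)
  then show "\<exists>c. (f \<longlongrightarrow> c) (at z)" if "\<not> is_pole f z"
    using that unfolding not_essential_def by blast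
next
  assume "\<exists>c. (f \<longlongrightarrow> c) (at z)"
  then show "\<not> is_pole f z"
    unfolding is_pole_def using not_tendsto_and_filterlim_at_infinity[OF at_neq_bot] by blast
qed

definition mat_convergent_at :: "nat \<Rightarrow> nat \<Rightarrow> (complex \<Rightarrow> complex mat) \<Rightarrow> complex \<Rightarrow> bool" where
  "mat_convergent_at n m F z \<longleftrightarrow> (\<forall>a<n. \<forall>b<m. \<exists>c. ((\<lambda>w. F w $$ (a,b)) \<longlongrightarrow> c) (at z))"

lemma mat_convergent_at_mult:
  assumes "\<And>w. A w \<in> carrier_mat n k" "\<And>w. B w \<in> carrier_mat k m"
    and "\<And>a l. a < n \<Longrightarrow> l < k \<Longrightarrow> ((\<lambda>w. A w $$ (a,l)) \<longlongrightarrow> A z $$ (a,l)) (at z)"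
    and "mat_convergent_at k m B z"
  shows "mat_convergent_at n m (\<lambda>w. A w * B w) z"
  unfolding mat_convergent_at_def
proof (intro allI impI)
  fix a b assume ab: "a < n" "b < m"
  have "\<forall>l<k. \<exists>c. ((\<lambda>w. B w $$ (l,b)) \<longlongrightarrow> c) (at z)"
    using assms(4) ab(2) unfolding mat_convergent_at_def by blast
  then obtain c where c: "\<And>l. l < k \<Longrightarrow> ((\<lambda>w. B w $$ (l,b)) \<longlongrightarrow> c l) (at z)"
    unfolding choice_iff' by blast
  have "((\<lambda>w. \<Sum>l<k. A w $$ (a,l) * B w $$ (l,b)) \<longlongrightarrow> (\<Sum>l<k. A z $$ (a,l) * c l)) (at z)"
    using ab by (intro tendsto_sum tendsto_mult assms(3) c) auto
  then show "\<exists>c. ((\<lambda>w. (A w * B w) $$ (a,b)) \<longlongrightarrow> c) (at z)"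
    using index_mult_mat_sum[OF assms(1,2) ab] by auto
qed

lemma mat_convergent_at_cancel_left:
  assumes U: "\<And>w. U w \<in> carrier_mat k k" and V: "\<And>w. V w \<in> carrier_mat k k"
    and B: "\<And>w. B w \<in> carrier_mat k m"
    and inverse: "\<And>w. V w * U w = d w \<cdot>\<^sub>m 1\<^sub>m k"
    and V_cont: "\<And>a l. a < k \<Longrightarrow> l < k \<Longrightarrow> ((\<lambda>w. V w $$ (a,l)) \<longlongrightarrow> V z $$ (a,l)) (at z)"
    and d: "(d \<longlongrightarrow> d z) (at z)" "d z \<noteq> 0"
    and UB: "mat_convergent_at k m (\<lambda>w. U w * B w) z"
  shows "mat_convergent_at k m B z"
proof -
  have VUB: "mat_convergent_at k m (\<lambda>w. V w * (U w * B w)) z"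
    by (rule mat_convergent_at_mult[OF V mult_carrier_mat[OF U B] V_cont UB])
  show ?thesis
    unfolding mat_convergent_at_def
  proof (intro allI impI)
    fix a b assume ab: "a < k" "b < m"
    obtain c where c: "((\<lambda>w. (V w * (U w * B w)) $$ (a,b)) \<longlongrightarrow> c) (at z)"
      using VUB ab unfolding mat_convergent_at_def by blast
    have "V w * (U w * B w) = d w \<cdot>\<^sub>m B w" for w
      using assoc_mult_mat[OF V[of w] U[of w] B[of w]] B[of w]
      by (simp add: inverse mult_smult_assoc_mat[OF one_carrier_mat B[of w]])
    moreover have "dim_row (B w) = k" "dim_col (B w) = m" for w using B[of w] by auto
    ultimately have "((\<lambda>w. d w * B w $$ (a,b)) \<longlongrightarrow> c) (at z)"
      using c ab by simp
    then have lim: "((\<lambda>w. d w * B w $$ (a,b) / d w) \<longlongrightarrow> c / d z) (at z)"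
      using d by (rule tendsto_divide)
    have "eventually (\<lambda>w. d w * B w $$ (a,b) / d w = B w $$ (a,b)) (at z)"
      using tendsto_imp_eventually_ne[OF d] by eventually_elim simp
    from Lim_transform_eventually[OF lim this]
    show "\<exists>c. ((\<lambda>w. B w $$ (a,b)) \<longlongrightarrow> c) (at z)" ..
  qed
qed

definition mat_remove_sings :: "nat \<Rightarrow> nat \<Rightarrow> (complex \<Rightarrow> complex mat) \<Rightarrow> complex \<Rightarrow> complex mat" where
  "mat_remove_sings n m F z = mat n m (\<lambda>(a,b). remove_sings (\<lambda>w. F w $$ (a,b)) z)"

lemma mat_remove_sings_index:
  "a < n \<Longrightarrow> b < m \<Longrightarrow> (\<lambda>z. mat_remove_sings n m F z $$ (a,b)) = remove_sings (\<lambda>w. F w $$ (a,b))"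
  by (simp add: mat_remove_sings_def)

lemma mat_remove_sings_carrier[simp]: "mat_remove_sings n m F z \<in> carrier_mat n m"
  by (simp add: mat_remove_sings_def)

lemma mat_remove_sings_not_pole_iff:
  assumes "\<And>a b. a < n \<Longrightarrow> b < m \<Longrightarrow> (\<lambda>w. F w $$ (a,b)) meromorphic_on A" "z \<in> A"
  shows "(\<forall>a<n. \<forall>b<m. \<not> is_pole (\<lambda>w. mat_remove_sings n m F w $$ (a,b)) z) \<longleftrightarrow> mat_convergent_at n m F z"
proof -
  have "\<not> is_pole (\<lambda>w. mat_remove_sings n m F w $$ (a,b)) z \<longleftrightarrow>
      (\<exists>c. ((\<lambda>w. F w $$ (a,b)) \<longlongrightarrow> c) (at z))" if "a < n" "b < m" for a b
  proof -
    have mero: "(\<lambda>w. F w $$ (a,b)) meromorphic_on {z}"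
      using meromorphic_on_subset[OF assms(1)[OF that]] assms(2) by blast
    have "\<not> is_pole (\<lambda>w. mat_remove_sings n m F w $$ (a,b)) z \<longleftrightarrow> \<not> is_pole (\<lambda>w. F w $$ (a,b)) z"
      unfolding mat_remove_sings_index[OF that]
      by (rule arg_cong[OF is_pole_remove_sings_iff[OF meromorphic_on_isolated_singularity[OF mero]]])
    also have "\<dots> \<longleftrightarrow> (\<exists>c. ((\<lambda>w. F w $$ (a,b)) \<longlongrightarrow> c) (at z))"
      by (rule not_is_pole_iff_convergent[OF mero]) simp
    finally show ?thesis .
  qed
  then show ?thesis unfolding mat_convergent_at_def by blast
qed

lemma mat_remove_sings_at_analytic:
  assumes "\<And>a b. a < n \<Longrightarrow> b < m \<Longrightarrow> (\<lambda>w. F w $$ (a,b)) analytic_on {z}" "F z \<in> carrier_mat n m"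
  shows "mat_remove_sings n m F z = F z"
  using assms by (intro eq_matI) (auto simp: mat_remove_sings_def)

definition mat_regular_at :: "nat \<Rightarrow> nat \<Rightarrow> (complex \<Rightarrow> complex mat) \<Rightarrow> complex \<Rightarrow> bool" where
  "mat_regular_at n m F z \<longleftrightarrow> (\<forall>a<n. \<forall>b<m. \<not> is_pole (\<lambda>w. F w $$ (a,b)) z)"

lemma meromorphic_on_mult_mat_index:
  assumes "\<And>w. U w \<in> carrier_mat n k" "\<And>w. S w \<in> carrier_mat k m"
    and "\<And>a l. a < n \<Longrightarrow> l < k \<Longrightarrow> (\<lambda>w. U w $$ (a,l)) analytic_on A"
    and "\<And>l b. l < k \<Longrightarrow> b < m \<Longrightarrow> (\<lambda>w. S w $$ (l,b)) meromorphic_on A"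
    and "a < n" "b < m"
  shows "(\<lambda>w. (U w * S w) $$ (a,b)) meromorphic_on A"
proof -
  have "(\<lambda>w. (U w * S w) $$ (a,b)) = (\<lambda>w. \<Sum>l<k. U w $$ (a,l) * S w $$ (l,b))"
    by (intro ext index_mult_mat_sum[OF assms(1,2,5,6)])
  moreover have "(\<lambda>w. U w $$ (a,l) * S w $$ (l,b)) meromorphic_on A" if "l < k" for l
    using assms(5,6) that by (intro meromorphic_on_mult analytic_on_imp_meromorphic_on assms(3,4))
  then have "(\<lambda>w. \<Sum>l<k. U w $$ (a,l) * S w $$ (l,b)) meromorphic_on A"
    by (intro meromorphic_on_sum) auto
  ultimately show ?thesis by simp
qed

lemma analytic_on_mult_mat_index:
  assumes "\<And>w. U w \<in> carrier_mat n k" "\<And>w. S w \<in> carrier_mat k m"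
    and "\<And>a l. a < n \<Longrightarrow> l < k \<Longrightarrow> (\<lambda>w. U w $$ (a,l)) analytic_on A"
    and "\<And>l b. l < k \<Longrightarrow> b < m \<Longrightarrow> (\<lambda>w. S w $$ (l,b)) analytic_on A"
    and "a < n" "b < m"
  shows "(\<lambda>w. (U w * S w) $$ (a,b)) analytic_on A"
proof -
  have "(\<lambda>w. (U w * S w) $$ (a,b)) = (\<lambda>w. \<Sum>l<k. U w $$ (a,l) * S w $$ (l,b))"
    by (intro ext index_mult_mat_sum[OF assms(1,2,5,6)])
  moreover have "(\<lambda>w. \<Sum>l<k. U w $$ (a,l) * S w $$ (l,b)) analytic_on A"
    using assms(3-6) by (intro analytic_on_sum analytic_on_mult) auto
  ultimately show ?thesis by simp
qed

lemma regularized_product_nicely_meromorphic: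
  assumes "\<And>w. U w \<in> carrier_mat n n" "\<And>w. S w \<in> carrier_mat n m"
    and "\<And>a l. a < n \<Longrightarrow> l < n \<Longrightarrow> (\<lambda>w. U w $$ (a,l)) analytic_on A"
    and "\<And>l b. l < n \<Longrightarrow> b < m \<Longrightarrow> (\<lambda>w. S w $$ (l,b)) meromorphic_on A"
    and "a < n" "b < m"
  shows "(\<lambda>w. mat_remove_sings n m (\<lambda>w. U w * S w) w $$ (a,b)) nicely_meromorphic_on A"
  unfolding mat_remove_sings_index[OF assms(5,6)]
  by (rule remove_sings_nicely_meromorphic[OF meromorphic_on_mult_mat_index[OF assms]])

lemma regularized_product_at_regular:
  assumes U: "\<And>w. U w \<in> carrier_mat n n" and S: "\<And>w. S w \<in> carrier_mat n m"
    and U_an: "\<And>a l. a < n \<Longrightarrow> l < n \<Longrightarrow> (\<lambda>w. U w $$ (a,l)) analytic_on A"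
    and S_mero: "\<And>l b. l < n \<Longrightarrow> b < m \<Longrightarrow> (\<lambda>w. S w $$ (l,b)) nicely_meromorphic_on A"
    and z: "z \<in> A" and regular: "mat_regular_at n m S z"
  shows "mat_remove_sings n m (\<lambda>w. U w * S w) z = U z * S z"
    and "mat_regular_at n m (mat_remove_sings n m (\<lambda>w. U w * S w)) z"
proof -
  have an: "(\<lambda>w. (U w * S w) $$ (a,b)) analytic_on {z}" if "a < n" "b < m" for a b
  proof (rule analytic_on_mult_mat_index[OF U S _ _ that])
    show "(\<lambda>w. U w $$ (a,l)) analytic_on {z}" if "a < n" "l < n" for a l
      using U_an[OF that] z analytic_on_subset by blast
    show "(\<lambda>w. S w $$ (l,b)) analytic_on {z}" if "l < n" "b < m" for l b
      using nicely_meromorphic_on_imp_analytic_at[OF S_mero[OF that] z] regular that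
      unfolding mat_regular_at_def by blast
  qed
  show "mat_remove_sings n m (\<lambda>w. U w * S w) z = U z * S z"
    by (rule mat_remove_sings_at_analytic[OF an mult_carrier_mat[OF U S]])
  show "mat_regular_at n m (mat_remove_sings n m (\<lambda>w. U w * S w)) z"
    unfolding mat_regular_at_def
  proof (intro allI impI)
    fix a b assume ab: "a < n" "b < m"
    have "isolated_singularity_at (\<lambda>w. (U w * S w) $$ (a,b)) z"
      using an[OF ab] by (intro meromorphic_on_isolated_singularity analytic_on_imp_meromorphic_on)
    then show "\<not> is_pole (\<lambda>w. mat_remove_sings n m (\<lambda>w. U w * S w) w $$ (a,b)) z"
      unfolding mat_remove_sings_index[OF ab] using analytic_at_imp_no_pole[OF an[OF ab]] by simp
  qed
qed

lemma regular_of_regularized_product: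
  assumes U: "\<And>w. U w \<in> carrier_mat n n" and V: "\<And>w. V w \<in> carrier_mat n n"
    and S: "\<And>w. S w \<in> carrier_mat n m"
    and U_an: "\<And>a l. a < n \<Longrightarrow> l < n \<Longrightarrow> (\<lambda>w. U w $$ (a,l)) analytic_on A"
    and V_an: "\<And>a l. a < n \<Longrightarrow> l < n \<Longrightarrow> (\<lambda>w. V w $$ (a,l)) analytic_on A"
    and d_an: "d analytic_on A" and inverse: "\<And>w. V w * U w = d w \<cdot>\<^sub>m 1\<^sub>m n"
    and S_mero: "\<And>l b. l < n \<Longrightarrow> b < m \<Longrightarrow> (\<lambda>w. S w $$ (l,b)) meromorphic_on A"
    and z: "z \<in> A" "d z \<noteq> 0"
    and regular: "mat_regular_at n m (mat_remove_sings n m (\<lambda>w. U w * S w)) z"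
  shows "mat_regular_at n m S z"
proof -
  have "mat_convergent_at n m (\<lambda>w. U w * S w) z"
    using regular mat_remove_sings_not_pole_iff[OF meromorphic_on_mult_mat_index[OF U S U_an S_mero] z(1)]
    unfolding mat_regular_at_def by blast
  moreover have "((\<lambda>w. V w $$ (a,l)) \<longlongrightarrow> V z $$ (a,l)) (at z)" if "a < n" "l < n" for a l
    using V_an[OF that] z(1) by (meson analytic_at_imp_isCont analytic_on_subset empty_subsetI
        insert_subset isContD)
  moreover have "(d \<longlongrightarrow> d z) (at z)"
    using d_an z(1) by (meson analytic_at_imp_isCont analytic_on_subset empty_subsetI insert_subset isContD)
  ultimately have "mat_convergent_at n m S z"
    using mat_convergent_at_cancel_left[where U=U and V=V and B=S and d=d] U V S inverse z(2) by blast
  then show ?thesis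
    using not_is_pole_iff_convergent[OF S_mero z(1)] unfolding mat_regular_at_def mat_convergent_at_def
    by blast
qed

lemma eventually_regular_cosparse:
  assumes "\<And>l b. l < n \<Longrightarrow> b < m \<Longrightarrow> (\<lambda>w. S w $$ (l,b)) meromorphic_on A"
  shows "eventually (mat_regular_at n m S) (cosparse A)"
proof -
  have "eventually (\<lambda>z. \<forall>l\<in>{..<n}. \<forall>b\<in>{..<m}. \<not> is_pole (\<lambda>w. S w $$ (l,b)) z) (cosparse A)"
    using assms by (intro eventually_ball_finite ballI finite_lessThan meromorphic_on_imp_not_pole_cosparse)
      auto
  then show ?thesis unfolding mat_regular_at_def by eventually_elim auto
qed

lemma stack_index_fun:
  "l < 2*p \<Longrightarrow> b < p \<Longrightarrow> (\<lambda>w. stack p (R w) (Q w) $$ (l,b)) =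
    (if l < p then (\<lambda>w. R w $$ (l,b)) else (\<lambda>w. Q w $$ (l - p, b)))"
  by (auto simp: stack_index)

lemma all_less_double_iff: "(\<forall>l<2*p. P l) \<longleftrightarrow> (\<forall>l<p. P l) \<and> (\<forall>l<p. P (l + p))" for p :: nat
proof (intro iffI allI impI)
  fix l assume "(\<forall>l<p. P l) \<and> (\<forall>l<p. P (l + p))" "l < 2*p"
  then show "P l" using less_double_cases[of l p P] by blast
qed simp

lemma stack_regular_iff:
  "mat_regular_at (2*p) p (\<lambda>w. stack p (R w) (Q w)) z \<longleftrightarrow> mat_defined_at p R z \<and> mat_defined_at p Q z"
  unfolding mat_regular_at_def mat_defined_at_def all_less_double_iff by (auto simp: stack_index_fun)

lemma stack_nicely_meromorphic:
  assumes "mat_meromorphic_on p R A" "mat_meromorphic_on p Q A" "l < 2*p" "b < p"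
  shows "(\<lambda>w. stack p (R w) (Q w) $$ (l,b)) nicely_meromorphic_on A"
  using assms unfolding mat_meromorphic_on_def stack_index_fun[OF assms(3,4)] by auto

lemma upper_lower_block_index_fun:
  "a < p \<Longrightarrow> b < p \<Longrightarrow> (\<lambda>w. upper_block p (F w) $$ (a,b)) = (\<lambda>w. F w $$ (a,b))"
  "a < p \<Longrightarrow> b < p \<Longrightarrow> (\<lambda>w. lower_block p (F w) $$ (a,b)) = (\<lambda>w. F w $$ (a + p, b))"
  by (simp_all add: upper_block_def lower_block_def)

lemma blocks_meromorphic:
  assumes "\<And>l b. l < 2*p \<Longrightarrow> b < p \<Longrightarrow> (\<lambda>w. F w $$ (l,b)) nicely_meromorphic_on A"
  shows "mat_meromorphic_on p (\<lambda>w. upper_block p (F w)) A"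
    and "mat_meromorphic_on p (\<lambda>w. lower_block p (F w)) A"
  using assms unfolding mat_meromorphic_on_def
  by (auto simp: upper_lower_block_index_fun upper_block_def lower_block_def)

lemma blocks_defined_iff:
  "mat_defined_at p (\<lambda>w. upper_block p (F w)) z \<and> mat_defined_at p (\<lambda>w. lower_block p (F w)) z \<longleftrightarrow>
    mat_regular_at (2*p) p F z"
  unfolding mat_regular_at_def mat_defined_at_def all_less_double_iff
  by (auto simp: upper_lower_block_index_fun)

lemma stack_upper_lower: "A \<in> carrier_mat (2*p) p \<Longrightarrow> stack p (upper_block p A) (lower_block p A) = A"
  by (rule eq_matI) (auto simp: stack_index upper_block_def lower_block_def)

section \<open>Weyl functions\<close>

lemma open_lower_half_plane: "open lower_half_plane"
  unfolding lower_half_plane_def by (rule open_halfspace_Im_lt)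

lemma lower_half_plane_nonzero: "lower_half_plane \<subseteq> - {0}"
  unfolding lower_half_plane_def by auto

lemma minus_i_in_lower_half_plane: "- \<i> \<in> lower_half_plane"
  unfolding lower_half_plane_def by simp

lemma analytic_on_reciprocal_compose:
  assumes "f holomorphic_on UNIV"
  shows "(\<lambda>z. f (c / z)) analytic_on lower_half_plane"
proof -
  have "(\<lambda>z. c / z) holomorphic_on - {0}"
    by (rule holomorphic_on_divide) (auto intro: holomorphic_on_const holomorphic_on_ident)
  then have "(f \<circ> (\<lambda>z. c / z)) holomorphic_on - {0}"
    by (rule holomorphic_on_compose_gen[OF _ assms]) simp
  then have "(\<lambda>z. f (c / z)) analytic_on - {0}"
    by (simp add: analytic_on_open open_Compl o_def)
  then show ?thesis by (rule analytic_on_subset[OF _ lower_half_plane_nonzero])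
qed

lemma transfer_determinant_nonzero:
  assumes "z \<in> lower_half_plane" "z \<noteq> - \<i>"
  shows "(1 - (\<i> / z)\<^sup>2) ^ n \<noteq> 0"
proof -
  have z: "z \<noteq> 0" "z \<noteq> \<i>" using assms(1) by (auto simp: lower_half_plane_def)
  have "\<i> / z \<noteq> 1" using z by (simp add: divide_eq_eq)
  moreover have "\<i> / z \<noteq> -1"
  proof
    assume "\<i> / z = -1"
    then have "\<i> = - z" using z(1) by (simp add: divide_eq_eq)
    then have "z = - \<i>" by (metis minus_minus)
    with assms(2) show False ..
  qed
  ultimately have "(\<i> / z)\<^sup>2 \<noteq> 1" using power2_eq_1_iff by blast
  then show ?thesis by (intro power_not_zero) simp
qed

definition Weyl_pair :: "nat \<Rightarrow> (complex \<Rightarrow> complex mat) \<Rightarrow> (complex \<Rightarrow> complex mat) \<Rightarrow> bool" where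
  "Weyl_pair p R Q \<longleftrightarrow>
     mat_meromorphic_on p R lower_half_plane \<and> mat_meromorphic_on p Q lower_half_plane \<and>
     mat_defined_at p R (- \<i>) \<and> mat_defined_at p Q (- \<i>) \<and>
     (\<forall>z\<in>lower_half_plane. mat_defined_at p R z \<and> mat_defined_at p Q z \<longrightarrow> admissible_pair p (R z) (Q z))"

lemma Weyl_pair_stack_iff:
  "Weyl_pair p R Q \<longleftrightarrow>
     mat_meromorphic_on p R lower_half_plane \<and> mat_meromorphic_on p Q lower_half_plane \<and>
     mat_regular_at (2*p) p (\<lambda>w. stack p (R w) (Q w)) (- \<i>) \<and>
     (\<forall>z\<in>lower_half_plane. mat_regular_at (2*p) p (\<lambda>w. stack p (R w) (Q w)) z \<longrightarrow>
        admissible_pair p (R z) (Q z))"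
  unfolding Weyl_pair_def stack_regular_iff by blast

lemma Weyl_pair_blocksI:
  assumes "\<And>l b. l < 2*p \<Longrightarrow> b < p \<Longrightarrow> (\<lambda>w. F w $$ (l,b)) nicely_meromorphic_on lower_half_plane"
    and "mat_regular_at (2*p) p F (- \<i>)"
    and "\<And>z. z \<in> lower_half_plane \<Longrightarrow> mat_regular_at (2*p) p F z \<Longrightarrow>
      admissible_pair p (upper_block p (F z)) (lower_block p (F z))"
  shows "Weyl_pair p (\<lambda>z. upper_block p (F z)) (\<lambda>z. lower_block p (F z))"
  unfolding Weyl_pair_def
  using blocks_meromorphic[OF assms(1)] blocks_defined_iff[of p F] assms(2,3) by blast

definition linear_fractional_value :: "nat \<Rightarrow> complex mat \<Rightarrow> complex mat \<Rightarrow> bool" where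
  "linear_fractional_value p G \<Phi> \<longleftrightarrow> invertible_mat (upper_block p G) \<and>
     \<Phi> = \<i> \<cdot>\<^sub>m lower_block p G * the (mat_inverse (upper_block p G))"

lemma WWblock_fraction_iff:
  assumes "X \<in> carrier_mat p p" "Y \<in> carrier_mat p p"
  shows "(invertible_mat (WWblock p \<beta> L 1 1 z * X + WWblock p \<beta> L 1 2 z * Y) \<and>
      \<Phi> = \<i> \<cdot>\<^sub>m (WWblock p \<beta> L 2 1 z * X + WWblock p \<beta> L 2 2 z * Y) *
        the (mat_inverse (WWblock p \<beta> L 1 1 z * X + WWblock p \<beta> L 1 2 z * Y))) \<longleftrightarrow>
    linear_fractional_value p (WW p \<beta> L z * stack p X Y) \<Phi>"
  by (simp only: WWblock_mult_stack[OF assms] linear_fractional_value_def)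

lemma WeylSet_iff:
  "\<phi> \<in> WeylSet p \<beta> L \<longleftrightarrow> mat_holomorphic_on p \<phi> lower_half_plane \<and>
    (\<exists>R Q. Weyl_pair p R Q \<and>
      (\<forall>\<^sub>\<approx>z\<in>lower_half_plane. linear_fractional_value p (WW p \<beta> L z * stack p (R z) (Q z)) (\<phi> z)))"
proof -
  have "(\<forall>\<^sub>\<approx>z\<in>lower_half_plane.
            invertible_mat (WWblock p \<beta> L 1 1 z * R z + WWblock p \<beta> L 1 2 z * Q z) \<and>
            \<phi> z = \<i> \<cdot>\<^sub>m (WWblock p \<beta> L 2 1 z * R z + WWblock p \<beta> L 2 2 z * Q z) *
                   the (mat_inverse (WWblock p \<beta> L 1 1 z * R z + WWblock p \<beta> L 1 2 z * Q z))) \<longleftrightarrow>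
        (\<forall>\<^sub>\<approx>z\<in>lower_half_plane. linear_fractional_value p (WW p \<beta> L z * stack p (R z) (Q z)) (\<phi> z))"
    if "mat_meromorphic_on p R lower_half_plane" "mat_meromorphic_on p Q lower_half_plane" for R Q
    using eventually_in_cosparse[OF order_refl open_lower_half_plane]
  proof (rule eventually_subst[OF eventually_mono])
    fix z assume "z \<in> lower_half_plane"
    then have "R z \<in> carrier_mat p p" "Q z \<in> carrier_mat p p"
      using that unfolding mat_meromorphic_on_def by blast+
    then show "(invertible_mat (WWblock p \<beta> L 1 1 z * R z + WWblock p \<beta> L 1 2 z * Q z) \<and>
            \<phi> z = \<i> \<cdot>\<^sub>m (WWblock p \<beta> L 2 1 z * R z + WWblock p \<beta> L 2 2 z * Q z) *
                   the (mat_inverse (WWblock p \<beta> L 1 1 z * R z + WWblock p \<beta> L 1 2 z * Q z))) \<longleftrightarrow>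
        linear_fractional_value p (WW p \<beta> L z * stack p (R z) (Q z)) (\<phi> z)"
      by (rule WWblock_fraction_iff)
  qed
  then show ?thesis
    unfolding WeylSet_def Weyl_pair_def admissible_pair_def mem_Collect_eq conj_assoc
    by (intro conj_cong refl ex_cong1) (simp only:)
qed

locale Weyl_multiplier =
  fixes p :: nat and U V :: "complex \<Rightarrow> complex mat" and d :: "complex \<Rightarrow> complex"
  assumes U_carrier: "U w \<in> carrier_mat (2*p) (2*p)"
    and V_carrier: "V w \<in> carrier_mat (2*p) (2*p)"
    and U_analytic: "a < 2*p \<Longrightarrow> l < 2*p \<Longrightarrow> (\<lambda>w. U w $$ (a,l)) analytic_on lower_half_plane"
    and V_analytic: "a < 2*p \<Longrightarrow> l < 2*p \<Longrightarrow> (\<lambda>w. V w $$ (a,l)) analytic_on lower_half_plane"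
    and d_analytic: "d analytic_on lower_half_plane"
    and left_inverse: "V w * U w = d w \<cdot>\<^sub>m 1\<^sub>m (2*p)"
    and d_nonzero: "z \<in> lower_half_plane \<Longrightarrow> z \<noteq> - \<i> \<Longrightarrow> d z \<noteq> 0"
    and preserves_cone: "z \<in> lower_half_plane \<Longrightarrow> x \<in> carrier_vec (2*p) \<Longrightarrow>
      Re (jform (jmat p) x) \<le> 0 \<Longrightarrow> x \<noteq> 0\<^sub>v (2*p) \<Longrightarrow>
      Re (jform (jmat p) (U z *\<^sub>v x)) \<le> 0 \<and> U z *\<^sub>v x \<noteq> 0\<^sub>v (2*p)"
begin

definition regularized :: "(complex \<Rightarrow> complex mat) \<Rightarrow> (complex \<Rightarrow> complex mat) \<Rightarrow> complex \<Rightarrow> complex mat"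
  where "regularized R Q = mat_remove_sings (2*p) p (\<lambda>w. U w * stack p (R w) (Q w))"

context
  fixes R Q :: "complex \<Rightarrow> complex mat"
  assumes R: "mat_meromorphic_on p R lower_half_plane" and Q: "mat_meromorphic_on p Q lower_half_plane"
begin

lemma stack_entries_nicely_meromorphic:
  "l < 2*p \<Longrightarrow> b < p \<Longrightarrow> (\<lambda>w. stack p (R w) (Q w) $$ (l,b)) nicely_meromorphic_on lower_half_plane"
  by (rule stack_nicely_meromorphic[OF R Q])

lemma stack_entries_meromorphic:
  "l < 2*p \<Longrightarrow> b < p \<Longrightarrow> (\<lambda>w. stack p (R w) (Q w) $$ (l,b)) meromorphic_on lower_half_plane"
  using stack_entries_nicely_meromorphic unfolding nicely_meromorphic_on_def by blast

lemma regularized_nicely_meromorphic: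
  "l < 2*p \<Longrightarrow> b < p \<Longrightarrow> (\<lambda>w. regularized R Q w $$ (l,b)) nicely_meromorphic_on lower_half_plane"
  unfolding regularized_def
  by (rule regularized_product_nicely_meromorphic[OF U_carrier stack_carrier U_analytic stack_entries_meromorphic])

lemma regularized_at_regular:
  assumes "z \<in> lower_half_plane" "mat_regular_at (2*p) p (\<lambda>w. stack p (R w) (Q w)) z"
  shows "regularized R Q z = U z * stack p (R z) (Q z)"
    and "mat_regular_at (2*p) p (regularized R Q) z"
  using regularized_product_at_regular[OF U_carrier stack_carrier U_analytic
      stack_entries_nicely_meromorphic assms]
  unfolding regularized_def by auto

lemma regular_of_regularized:
  assumes "z \<in> lower_half_plane" "z \<noteq> - \<i>" "mat_regular_at (2*p) p (regularized R Q) z"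
  shows "mat_regular_at (2*p) p (\<lambda>w. stack p (R w) (Q w)) z"
  using regular_of_regularized_product[OF U_carrier V_carrier stack_carrier U_analytic V_analytic
      d_analytic left_inverse stack_entries_meromorphic] assms d_nonzero
  unfolding regularized_def by blast

lemma stack_regularized: "stack p (upper_block p (regularized R Q z)) (lower_block p (regularized R Q z)) =
    regularized R Q z"
  by (rule stack_upper_lower) (simp add: regularized_def)

end

lemma Weyl_pair_mult:
  assumes "Weyl_pair p R Q"
  shows "\<exists>R' Q'. Weyl_pair p R' Q' \<and>
    (\<forall>\<^sub>\<approx>z\<in>lower_half_plane. stack p (R' z) (Q' z) = U z * stack p (R z) (Q z))"
proof -
  let ?S = "\<lambda>w. stack p (R w) (Q w)"
  have R: "mat_meromorphic_on p R lower_half_plane" and Q: "mat_meromorphic_on p Q lower_half_plane"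
    and regular_i: "mat_regular_at (2*p) p ?S (- \<i>)"
    and adm: "\<And>z. z \<in> lower_half_plane \<Longrightarrow> mat_regular_at (2*p) p ?S z \<Longrightarrow> admissible_pair p (R z) (Q z)"
    using assms unfolding Weyl_pair_stack_iff by auto
  have regular: "mat_regular_at (2*p) p ?S z"
    if "z \<in> lower_half_plane" "mat_regular_at (2*p) p (regularized R Q) z" for z
    using that regular_of_regularized[OF R Q] regular_i by (cases "z = - \<i>") auto
  have "Weyl_pair p (\<lambda>z. upper_block p (regularized R Q z)) (\<lambda>z. lower_block p (regularized R Q z))"
  proof (rule Weyl_pair_blocksI)
    show "mat_regular_at (2*p) p (regularized R Q) (- \<i>)"
      by (rule regularized_at_regular(2)[OF R Q minus_i_in_lower_half_plane regular_i])
    fix z assume z: "z \<in> lower_half_plane" and "mat_regular_at (2*p) p (regularized R Q) z"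
    then have regular_z: "mat_regular_at (2*p) p ?S z" by (rule regular)
    show "admissible_pair p (upper_block p (regularized R Q z)) (lower_block p (regularized R Q z))"
    proof (rule admissible_pair_transfer[OF _ _ _ _ U_carrier preserves_cone[OF z] _ adm[OF z regular_z]])
      show "stack p (upper_block p (regularized R Q z)) (lower_block p (regularized R Q z)) =
          U z * stack p (R z) (Q z)"
        unfolding stack_regularized[OF R Q] by (rule regularized_at_regular(1)[OF R Q z regular_z])
    qed (use z R Q in \<open>auto simp: upper_block_def lower_block_def mat_meromorphic_on_def\<close>)
  qed (rule regularized_nicely_meromorphic[OF R Q])
  moreover have "\<forall>\<^sub>\<approx>z\<in>lower_half_plane. mat_regular_at (2*p) p ?S z"
    by (rule eventually_regular_cosparse) (rule stack_entries_meromorphic[OF R Q])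
  then have "\<forall>\<^sub>\<approx>z\<in>lower_half_plane. stack p (upper_block p (regularized R Q z))
      (lower_block p (regularized R Q z)) = U z * stack p (R z) (Q z)"
    using eventually_in_cosparse[OF order_refl open_lower_half_plane]
    by eventually_elim (unfold stack_regularized[OF R Q], rule regularized_at_regular(1)[OF R Q])
  ultimately show ?thesis by blast
qed

end

lemma transfer_prod_Weyl_multiplier:
  assumes "\<And>k. a \<le> k \<Longrightarrow> k < a + n \<Longrightarrow> \<beta> k \<in> carrier_mat p (2*p)"
    and "\<And>k. a \<le> k \<Longrightarrow> k < a + n \<Longrightarrow> \<beta> k * Jmat p * mat_adjoint (\<beta> k) = 1\<^sub>m p"
  shows "Weyl_multiplier p (\<lambda>z. transfer_prod p \<beta> a n (\<i> / z)) (\<lambda>z. transfer_coprod p \<beta> a n (\<i> / z))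
    (\<lambda>z. (1 - (\<i> / z)\<^sup>2) ^ n)"
proof
  show "(\<lambda>w. transfer_prod p \<beta> a n (\<i> / w) $$ (i,j)) analytic_on lower_half_plane"
    and "(\<lambda>w. transfer_coprod p \<beta> a n (\<i> / w) $$ (i,j)) analytic_on lower_half_plane"
    if "i < 2*p" "j < 2*p" for i j
    using that by (auto intro: analytic_on_reciprocal_compose transfer_prod_holomorphic
        transfer_coprod_holomorphic)
  show "(\<lambda>z. (1 - (\<i> / z)\<^sup>2) ^ n) analytic_on lower_half_plane"
    by (rule analytic_on_reciprocal_compose)
      (intro holomorphic_on_power holomorphic_on_diff holomorphic_on_const holomorphic_on_ident)
  show "transfer_coprod p \<beta> a n (\<i> / w) * transfer_prod p \<beta> a n (\<i> / w) = (1 - (\<i> / w)\<^sup>2) ^ n \<cdot>\<^sub>m 1\<^sub>m (2*p)"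
    for w by (rule transfer_coprod_mult_prod) (use assms in auto)
  show "Re (jform (jmat p) (transfer_prod p \<beta> a n (\<i> / z) *\<^sub>v x)) \<le> 0 \<and>
      transfer_prod p \<beta> a n (\<i> / z) *\<^sub>v x \<noteq> 0\<^sub>v (2*p)"
    if "z \<in> lower_half_plane" "x \<in> carrier_vec (2*p)" "Re (jform (jmat p) x) \<le> 0" "x \<noteq> 0\<^sub>v (2*p)" for z x
    using that assms by (intro transfer_prod_preserves_cone Re_i_div_neg) (auto simp: lower_half_plane_def)
  show "(1 - (\<i> / z)\<^sup>2) ^ n \<noteq> 0" if "z \<in> lower_half_plane" "z \<noteq> - \<i>" for z
    using that by (rule transfer_determinant_nonzero)
qed simp_all

theorem proposition5p7:
  fixes p N M :: nat and \<beta> :: "nat \<Rightarrow> complex mat"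
  assumes "p \<ge> 1" and "M < N"
    and "\<And>k. k \<le> N \<Longrightarrow> \<beta> k \<in> carrier_mat p (2*p)"
    and "\<And>k. k \<le> N \<Longrightarrow> \<beta> k * Jmat p * mat_adjoint (\<beta> k) = 1\<^sub>m p"
  shows "WeylSet p \<beta> N \<subseteq> WeylSet p \<beta> M"
proof
  fix \<phi> assume "\<phi> \<in> WeylSet p \<beta> N"
  then obtain R Q where hol: "mat_holomorphic_on p \<phi> lower_half_plane" and pair: "Weyl_pair p R Q"
    and fraction: "\<forall>\<^sub>\<approx>z\<in>lower_half_plane.
      linear_fractional_value p (WW p \<beta> N z * stack p (R z) (Q z)) (\<phi> z)"
    unfolding WeylSet_iff by blast
  interpret Weyl_multiplier p "\<lambda>z. transfer_prod p \<beta> (Suc M) (N - M) (\<i> / z)"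
    "\<lambda>z. transfer_coprod p \<beta> (Suc M) (N - M) (\<i> / z)" "\<lambda>z. (1 - (\<i> / z)\<^sup>2) ^ (N - M)"
    by (rule transfer_prod_Weyl_multiplier) (use assms(2-4) in auto)
  obtain R' Q' where pair': "Weyl_pair p R' Q'"
    and stack_eq: "\<forall>\<^sub>\<approx>z\<in>lower_half_plane.
      stack p (R' z) (Q' z) = transfer_prod p \<beta> (Suc M) (N - M) (\<i> / z) * stack p (R z) (Q z)"
    using Weyl_pair_mult[OF pair] by blast
  have "\<forall>\<^sub>\<approx>z\<in>lower_half_plane.
      linear_fractional_value p (WW p \<beta> M z * stack p (R' z) (Q' z)) (\<phi> z)"
    using fraction stack_eq
  proof eventually_elim
    case (elim z)
    have "WW p \<beta> N z * stack p (R z) (Q z) = WW p \<beta> M z * stack p (R' z) (Q' z)"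
      using assms(2,3) by (simp add: elim(2) WW_split assoc_mult_mat[OF WW_carrier transfer_prod_carrier stack_carrier])
    then show ?case using elim(1) by simp
  qed
  with hol pair' show "\<phi> \<in> WeylSet p \<beta> M"
    unfolding WeylSet_iff by blast
qed

end
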